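(* Let $\mathbf{C}$ be a small 2-category and $\mathbf{D}$ a 2-category with an enhanced factorization system $(\mathcal{E},\mathcal{M})$ such that: $(\mathcal{E},\mathcal{M})$ separates parallel pairs; every 1-cell in $\mathcal{E}$ is a 2-epimorphism and every 1-cell in $\mathcal{M}$ is a 2-monomorphism; and post-composition with 1-cells in $\mathcal{M}$ creates invertible 2-cells. Then $(\mathcal{E}^{\mathbf{C}},\mathcal{M}^{\mathbf{C}})$ is a rigid enhanced factorization system on $\mathbf{D}^{\mathbf{C}}$.
   Context: For a 2-category $\mathbf{A}$, an enhanced factorization system on $\mathbf{A}$ is a pair $(\mathcal{E},\mathcal{M})$ of classes of 1-cells of $\mathbf{A}$, each containing all isomorphisms, such that: (i) every 1-cell $\alpha$ factors (not necessarily uniquely) as $\alpha=\mu\circ\varepsilon$ with $\varepsilon\in\mathcal{E}$, $\mu\in\mathcal{M}$; (ii) given $\varepsilon\colon F\to F'$ in $\mathcal{E}$, $\mu\colon G\to G'$ in $\mathcal{M}$, 1-cells $\alpha\colon F\to G$, $\alpha'\colon F'\to G'$ and an invertible 2-cell $\Psi\colon \alpha'\varepsilon\Rightarrow\mu\alpha$, there is a unique pair $(\delta,\widetilde\Psi)$ with $\delta\colon F'\to G$ a 1-cell and $\widetilde\Psi\colon\alpha'\Rightarrow\mu\delta$ an invertible 2-cell such that $\delta\varepsilon=\alpha$ and the whiskering $\widetilde\Psi\varepsilon=\Psi$; moreover if $\Psi$ is an identity then $\mu\delta=\alpha'$ and $\widetilde\Psi$ is an identity; (iii) given $\varepsilon\colon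 F\to F'$ in $\mathcal{E}$, $\mu\colon G\to G'$ in $\mathcal{M}$, parallel 1-cells $\alpha_1,\alpha_2\colon F\to G$ and $\alpha_1',\alpha_2'\colon F'\to G'$ with $\alpha_i'\varepsilon=\mu\alpha_i$ ($i=1,2$), and 2-cells $\Phi\colon\alpha_1\Rightarrow\alpha_2$, $\Phi'\colon\alpha_1'\Rightarrow\alpha_2'$ with $\mu\Phi=\Phi'\varepsilon$, let $\delta_i\colon F'\to G$ be the unique 1-cells with $\delta_i\varepsilon=\alpha_i$ and $\mu\delta_i=\alpha_i'$ (from (ii) with identity 2-cell); then there is a unique 2-cell $\Delta\colon\delta_1\Rightarrow\delta_2$ with $\Delta\varepsilon=\Phi$ and $\mu\Delta=\Phi'$. It is rigid if moreover: for 1-cells $\mu\colon F\to G$ in $\mathcal{M}$ and $\alpha\colon G\to F$, if $\mu\alpha\cong\mathrm{id}_G$ (invertible 2-cell) then $\alpha\mu\cong\mathrm{id}_F$. $(\mathcal{E},\mathcal{M})$ separates parallel pairs if whenever $\alpha,\beta\colon F\to G$ are parallel 1-cells for which there exist $\varepsilon\in\mathcal{E}$ with target $F$ and $\alpha\varepsilon=\beta\varepsilon$, and $\mu\in\mathcal{M}$ with source $G$ and $\mu\alpha=\mu\beta$, then $\alpha=\beta$. A 1-cell $\varepsilon\colon F\to G$ is a 2-epimorphism if for all 1-cells $\beta,\beta'\colon G\to H$ and 2-cells $\Psi,\Psi'\colon\beta\Rightarrow\beta'$, $\Psi\varepsilon=\Psi'\varepsilon$ implies $\Psi=\Psi'$.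 A 1-cell $\mu\colon G\to H$ is a 2-monomorphism if for all 1-cells $\beta,\beta'\colon F\to G$ and 2-cells $\Psi,\Psi'\colon\beta\Rightarrow\beta'$, $\mu\Psi=\mu\Psi'$ implies $\Psi=\Psi'$. Post-composition with a 1-cell $\mu$ creates invertible 2-cells if for all parallel 1-cells $\alpha,\beta$ (composable with $\mu$) and every invertible 2-cell $\Psi\colon\mu\alpha\Rightarrow\mu\beta$ there is a unique invertible 2-cell $\widehat\Psi\colon\alpha\Rightarrow\beta$ with $\mu\widehat\Psi=\Psi$; post-composition with 1-cells in $\mathcal{M}$ creates invertible 2-cells if this holds for every $\mu\in\mathcal{M}$. $\mathbf{D}^{\mathbf{C}}$ is the 2-category of 2-functors $\mathbf{C}\to\mathbf{D}$, 2-natural transformations, and modifications. $\mathcal{E}^{\mathbf{C}}$ (resp. $\mathcal{M}^{\mathbf{C}}$) is the class of 2-natural transformations all of whose components lie in $\mathcal{E}$ (resp. $\mathcal{M}$). *)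

theory Defs
  imports "HOL-Library.FuncSet"
begin

section \<open>Strict 2-categories, presented by carriers and partial operations\<close>

record ('o,'m,'t) twocat =
  Obj   :: "'o set"
  Hom1  :: "'m set"
  src1  :: "'m \<Rightarrow> 'o"
  tgt1  :: "'m \<Rightarrow> 'o"
  comp1 :: "'m \<Rightarrow> 'm \<Rightarrow> 'm"   (* comp1 g f = g \<circ> f, defined when tgt1 f = src1 g *)
  id1   :: "'o \<Rightarrow> 'm"
  Hom2  :: "'t set"
  dom2  :: "'t \<Rightarrow> 'm"
  cod2  :: "'t \<Rightarrow> 'm"
  vcomp :: "'t \<Rightarrow> 't \<Rightarrow> 't"   (* vcomp b a = b \<cdot> a, defined when cod2 a = dom2 b *)
  hcomp :: "'t \<Rightarrow> 't \<Rightarrow> 't"   (* hcomp b a = b * a, a over A\<rightarrow>B, b over B\<rightarrow>C *)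
  id2   :: "'m \<Rightarrow> 't"

definition arr1 :: "('o,'m,'t,'x) twocat_scheme \<Rightarrow> 'm \<Rightarrow> 'o \<Rightarrow> 'o \<Rightarrow> bool" where
  "arr1 A f X Y \<longleftrightarrow> f \<in> Hom1 A \<and> src1 A f = X \<and> tgt1 A f = Y"

definition arr2 :: "('o,'m,'t,'x) twocat_scheme \<Rightarrow> 't \<Rightarrow> 'm \<Rightarrow> 'm \<Rightarrow> bool" where
  "arr2 A a f g \<longleftrightarrow> a \<in> Hom2 A \<and> dom2 A a = f \<and> cod2 A a = g"

definition lwhisk :: "('o,'m,'t,'x) twocat_scheme \<Rightarrow> 'm \<Rightarrow> 't \<Rightarrow> 't" where
  "lwhisk A m a = hcomp A (id2 A m) a"
definition rwhisk :: "('o,'m,'t,'x) twocat_scheme \<Rightarrow> 't \<Rightarrow> 'm \<Rightarrow> 't" where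
  "rwhisk A a e = hcomp A a (id2 A e)"

definition twocat :: "('o,'m,'t,'x) twocat_scheme \<Rightarrow> bool" where
  "twocat A \<longleftrightarrow>
    (\<forall>f\<in>Hom1 A. src1 A f \<in> Obj A \<and> tgt1 A f \<in> Obj A) \<and>
    (\<forall>X\<in>Obj A. arr1 A (id1 A X) X X) \<and>
    (\<forall>f g X Y Z. arr1 A f X Y \<longrightarrow> arr1 A g Y Z \<longrightarrow> arr1 A (comp1 A g f) X Z) \<and>
    (\<forall>f g h W X Y Z. arr1 A f W X \<longrightarrow> arr1 A g X Y \<longrightarrow> arr1 A h Y Z \<longrightarrow>
        comp1 A h (comp1 A g f) = comp1 A (comp1 A h g) f) \<and>
    (\<forall>f X Y. arr1 A f X Y \<longrightarrow> comp1 A f (id1 A X) = f \<and> comp1 A (id1 A Y) f = f) \<and>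
    (\<forall>a\<in>Hom2 A. dom2 A a \<in> Hom1 A \<and> cod2 A a \<in> Hom1 A \<and>
        src1 A (dom2 A a) = src1 A (cod2 A a) \<and> tgt1 A (dom2 A a) = tgt1 A (cod2 A a)) \<and>
    (\<forall>f\<in>Hom1 A. arr2 A (id2 A f) f f) \<and>
    (\<forall>a b f g h. arr2 A a f g \<longrightarrow> arr2 A b g h \<longrightarrow> arr2 A (vcomp A b a) f h) \<and>
    (\<forall>a b c f g h k. arr2 A a f g \<longrightarrow> arr2 A b g h \<longrightarrow> arr2 A c h k \<longrightarrow>
        vcomp A c (vcomp A b a) = vcomp A (vcomp A c b) a) \<and>
    (\<forall>a f g. arr2 A a f g \<longrightarrow> vcomp A a (id2 A f) = a \<and> vcomp A (id2 A g) a = a) \<and>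
    (\<forall>a b f f' g g' X Y Z. arr1 A f X Y \<longrightarrow> arr1 A g Y Z \<longrightarrow> arr2 A a f f' \<longrightarrow> arr2 A b g g' \<longrightarrow>
        arr2 A (hcomp A b a) (comp1 A g f) (comp1 A g' f')) \<and>
    (\<forall>a b c f f' g g' h h' W X Y Z. arr1 A f W X \<longrightarrow> arr1 A g X Y \<longrightarrow> arr1 A h Y Z \<longrightarrow>
        arr2 A a f f' \<longrightarrow> arr2 A b g g' \<longrightarrow> arr2 A c h h' \<longrightarrow>
        hcomp A c (hcomp A b a) = hcomp A (hcomp A c b) a) \<and>
    (\<forall>a f f' X Y. arr1 A f X Y \<longrightarrow> arr2 A a f f' \<longrightarrow>
        hcomp A a (id2 A (id1 A X)) = a \<and> hcomp A (id2 A (id1 A Y)) a = a) \<and>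
    (\<forall>f g X Y Z. arr1 A f X Y \<longrightarrow> arr1 A g Y Z \<longrightarrow>
        hcomp A (id2 A g) (id2 A f) = id2 A (comp1 A g f)) \<and>
    (\<forall>a a' b b' f f' f'' g g' g'' X Y Z. arr1 A f X Y \<longrightarrow> arr1 A g Y Z \<longrightarrow>
        arr2 A a f f' \<longrightarrow> arr2 A a' f' f'' \<longrightarrow> arr2 A b g g' \<longrightarrow> arr2 A b' g' g'' \<longrightarrow>
        hcomp A (vcomp A b' b) (vcomp A a' a) = vcomp A (hcomp A b' a') (hcomp A b a))"

type_synonym ('oc,'mc,'tc,'od,'md,'td) twofun =
  "('oc \<Rightarrow> 'od) \<times> ('mc \<Rightarrow> 'md) \<times> ('tc \<Rightarrow> 'td)"

definition twofunctor ::
  "('oc,'mc,'tc,'x) twocat_scheme \<Rightarrow> ('od,'md,'td,'y) twocat_scheme \<Rightarrow>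
   ('oc,'mc,'tc,'od,'md,'td) twofun \<Rightarrow> bool" where
  "twofunctor C D F \<longleftrightarrow> (case F of (F0, F1, F2) \<Rightarrow>
     F0 \<in> extensional (Obj C) \<and> F1 \<in> extensional (Hom1 C) \<and> F2 \<in> extensional (Hom2 C) \<and>
     (\<forall>X\<in>Obj C. F0 X \<in> Obj D) \<and>
     (\<forall>f X Y. arr1 C f X Y \<longrightarrow> arr1 D (F1 f) (F0 X) (F0 Y)) \<and>
     (\<forall>a f g. arr2 C a f g \<longrightarrow> arr2 D (F2 a) (F1 f) (F1 g)) \<and>
     (\<forall>X\<in>Obj C. F1 (id1 C X) = id1 D (F0 X)) \<and>
     (\<forall>f g X Y Z. arr1 C f X Y \<longrightarrow> arr1 C g Y Z \<longrightarrow> F1 (comp1 C g f) = comp1 D (F1 g) (F1 f)) \<and>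
     (\<forall>f\<in>Hom1 C. F2 (id2 C f) = id2 D (F1 f)) \<and>
     (\<forall>a b f g h. arr2 C a f g \<longrightarrow> arr2 C b g h \<longrightarrow> F2 (vcomp C b a) = vcomp D (F2 b) (F2 a)) \<and>
     (\<forall>a b f f' g g' X Y Z. arr1 C f X Y \<longrightarrow> arr1 C g Y Z \<longrightarrow> arr2 C a f f' \<longrightarrow> arr2 C b g g' \<longrightarrow>
        F2 (hcomp C b a) = hcomp D (F2 b) (F2 a)))"

type_synonym ('oc,'mc,'tc,'od,'md,'td) twonat =
  "('oc,'mc,'tc,'od,'md,'td) twofun \<times> ('oc,'mc,'tc,'od,'md,'td) twofun \<times> ('oc \<Rightarrow> 'md)"

type_synonym ('oc,'mc,'tc,'od,'md,'td) modif =
  "('oc,'mc,'tc,'od,'md,'td) twonat \<times> ('oc,'mc,'tc,'od,'md,'td) twonat \<times> ('oc \<Rightarrow> 'td)"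

definition F0 where "F0 F = fst F"
definition F1 where "F1 F = fst (snd F)"
definition F2 where "F2 F = snd (snd F)"

definition nsrc where "nsrc a = fst a"
definition ntgt where "ntgt a = fst (snd a)"
definition ncmp where "ncmp a = snd (snd a)"

definition twonatural ::
  "('oc,'mc,'tc,'x) twocat_scheme \<Rightarrow> ('od,'md,'td,'y) twocat_scheme \<Rightarrow>
   ('oc,'mc,'tc,'od,'md,'td) twonat \<Rightarrow> bool" where
  "twonatural C D \<alpha> \<longleftrightarrow> (let F = nsrc \<alpha>; G = ntgt \<alpha>; a = ncmp \<alpha> in
     twofunctor C D F \<and> twofunctor C D G \<and> a \<in> extensional (Obj C) \<and>
     (\<forall>X\<in>Obj C. arr1 D (a X) (F0 F X) (F0 G X)) \<and>
     (\<forall>f X Y. arr1 C f X Y \<longrightarrow> comp1 D (F1 G f) (a X) = comp1 D (a Y) (F1 F f)) \<and>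
     (\<forall>t f g X Y. arr1 C f X Y \<longrightarrow> arr2 C t f g \<longrightarrow>
        rwhisk D (F2 G t) (a X) = lwhisk D (a Y) (F2 F t)))"

definition modification ::
  "('oc,'mc,'tc,'x) twocat_scheme \<Rightarrow> ('od,'md,'td,'y) twocat_scheme \<Rightarrow>
   ('oc,'mc,'tc,'od,'md,'td) modif \<Rightarrow> bool" where
  "modification C D \<Gamma> \<longleftrightarrow> (let \<alpha> = nsrc \<Gamma>; \<beta> = ntgt \<Gamma>; g = ncmp \<Gamma> in
     twonatural C D \<alpha> \<and> twonatural C D \<beta> \<and> nsrc \<alpha> = nsrc \<beta> \<and> ntgt \<alpha> = ntgt \<beta> \<and>
     g \<in> extensional (Obj C) \<and>
     (\<forall>X\<in>Obj C. arr2 D (g X) (ncmp \<alpha> X) (ncmp \<beta> X)) \<and>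
     (\<forall>f X Y. arr1 C f X Y \<longrightarrow>
        lwhisk D (F1 (ntgt \<alpha>) f) (g X) = rwhisk D (g Y) (F1 (nsrc \<alpha>) f)))"

definition funcat ::
  "('oc,'mc,'tc,'x) twocat_scheme \<Rightarrow> ('od,'md,'td,'y) twocat_scheme \<Rightarrow>
   (('oc,'mc,'tc,'od,'md,'td) twofun, ('oc,'mc,'tc,'od,'md,'td) twonat,
    ('oc,'mc,'tc,'od,'md,'td) modif) twocat" where
  "funcat C D = \<lparr>
     Obj = {F. twofunctor C D F},
     Hom1 = {\<alpha>. twonatural C D \<alpha>},
     src1 = nsrc,
     tgt1 = ntgt,
     comp1 = (\<lambda>\<beta> \<alpha>. (nsrc \<alpha>, ntgt \<beta>, \<lambda>X\<in>Obj C. comp1 D (ncmp \<beta> X) (ncmp \<alpha> X))),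
     id1 = (\<lambda>F. (F, F, \<lambda>X\<in>Obj C. id1 D (F0 F X))),
     Hom2 = {\<Gamma>. modification C D \<Gamma>},
     dom2 = nsrc,
     cod2 = ntgt,
     vcomp = (\<lambda>\<Delta> \<Gamma>. (nsrc \<Gamma>, ntgt \<Delta>, \<lambda>X\<in>Obj C. vcomp D (ncmp \<Delta> X) (ncmp \<Gamma> X))),
     hcomp = (\<lambda>\<Delta> \<Gamma>.
        ((nsrc (nsrc \<Gamma>), ntgt (nsrc \<Delta>), \<lambda>X\<in>Obj C. comp1 D (ncmp (nsrc \<Delta>) X) (ncmp (nsrc \<Gamma>) X)),
         (nsrc (ntgt \<Gamma>), ntgt (ntgt \<Delta>), \<lambda>X\<in>Obj C. comp1 D (ncmp (ntgt \<Delta>) X) (ncmp (ntgt \<Gamma>) X)),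
         \<lambda>X\<in>Obj C. hcomp D (ncmp \<Delta> X) (ncmp \<Gamma> X))),
     id2 = (\<lambda>\<alpha>. (\<alpha>, \<alpha>, \<lambda>X\<in>Obj C. id2 D (ncmp \<alpha> X)))
   \<rparr>"

definition pointwise ::
  "('oc,'mc,'tc,'x) twocat_scheme \<Rightarrow> ('od,'md,'td,'y) twocat_scheme \<Rightarrow> 'md set \<Rightarrow>
   ('oc,'mc,'tc,'od,'md,'td) twonat set" where
  "pointwise C D K = {\<alpha>. twonatural C D \<alpha> \<and> (\<forall>X\<in>Obj C. ncmp \<alpha> X \<in> K)}"

definition iso1 :: "('o,'m,'t,'x) twocat_scheme \<Rightarrow> 'm \<Rightarrow> bool" where
  "iso1 A f \<longleftrightarrow> f \<in> Hom1 A \<and> (\<exists>g. arr1 A g (tgt1 A f) (src1 A f) \<and>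
      comp1 A g f = id1 A (src1 A f) \<and> comp1 A f g = id1 A (tgt1 A f))"

definition inv2 :: "('o,'m,'t,'x) twocat_scheme \<Rightarrow> 't \<Rightarrow> bool" where
  "inv2 A a \<longleftrightarrow> a \<in> Hom2 A \<and> (\<exists>b. arr2 A b (cod2 A a) (dom2 A a) \<and>
      vcomp A b a = id2 A (dom2 A a) \<and> vcomp A a b = id2 A (cod2 A a))"

definition iso2cells :: "('o,'m,'t,'x) twocat_scheme \<Rightarrow> 'm \<Rightarrow> 'm \<Rightarrow> bool" where
  "iso2cells A f g \<longleftrightarrow> (\<exists>a. arr2 A a f g \<and> inv2 A a)"

definition enhanced_fs :: "('o,'m,'t,'x) twocat_scheme \<Rightarrow> 'm set \<Rightarrow> 'm set \<Rightarrow> bool" where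
  "enhanced_fs A E M \<longleftrightarrow>
    E \<subseteq> Hom1 A \<and> M \<subseteq> Hom1 A \<and>
    {f. iso1 A f} \<subseteq> E \<and> {f. iso1 A f} \<subseteq> M \<and>
    \<comment> \<open>(i)\<close>
    (\<forall>\<alpha>\<in>Hom1 A. \<exists>\<epsilon>\<in>E. \<exists>\<mu>\<in>M. tgt1 A \<epsilon> = src1 A \<mu> \<and> \<alpha> = comp1 A \<mu> \<epsilon>) \<and>
    \<comment> \<open>(ii)\<close>
    (\<forall>\<epsilon>\<in>E. \<forall>\<mu>\<in>M. \<forall>F F' G G' \<alpha> \<alpha>' \<Psi>.
       arr1 A \<epsilon> F F' \<longrightarrow> arr1 A \<mu> G G' \<longrightarrow> arr1 A \<alpha> F G \<longrightarrow> arr1 A \<alpha>' F' G' \<longrightarrow>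
       arr2 A \<Psi> (comp1 A \<alpha>' \<epsilon>) (comp1 A \<mu> \<alpha>) \<longrightarrow> inv2 A \<Psi> \<longrightarrow>
       (\<exists>!(\<delta>, \<Psi>t). arr1 A \<delta> F' G \<and> arr2 A \<Psi>t \<alpha>' (comp1 A \<mu> \<delta>) \<and> inv2 A \<Psi>t \<and>
                     comp1 A \<delta> \<epsilon> = \<alpha> \<and> rwhisk A \<Psi>t \<epsilon> = \<Psi>) \<and>
       (\<Psi> = id2 A (comp1 A \<alpha>' \<epsilon>) \<longrightarrow>
          (\<forall>\<delta> \<Psi>t. arr1 A \<delta> F' G \<and> arr2 A \<Psi>t \<alpha>' (comp1 A \<mu> \<delta>) \<and> inv2 A \<Psi>t \<and>
                     comp1 A \<delta> \<epsilon> = \<alpha> \<and> rwhisk A \<Psi>t \<epsilon> = \<Psi> \<longrightarrow>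
                     comp1 A \<mu> \<delta> = \<alpha>' \<and> \<Psi>t = id2 A \<alpha>'))) \<and>
    \<comment> \<open>(iii)\<close>
    (\<forall>\<epsilon>\<in>E. \<forall>\<mu>\<in>M. \<forall>F F' G G' \<alpha>1 \<alpha>2 \<alpha>1' \<alpha>2' \<Phi> \<Phi>' \<delta>1 \<delta>2.
       arr1 A \<epsilon> F F' \<longrightarrow> arr1 A \<mu> G G' \<longrightarrow>
       arr1 A \<alpha>1 F G \<longrightarrow> arr1 A \<alpha>2 F G \<longrightarrow> arr1 A \<alpha>1' F' G' \<longrightarrow> arr1 A \<alpha>2' F' G' \<longrightarrow>
       comp1 A \<alpha>1' \<epsilon> = comp1 A \<mu> \<alpha>1 \<longrightarrow> comp1 A \<alpha>2' \<epsilon> = comp1 A \<mu> \<alpha>2 \<longrightarrow>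
       arr2 A \<Phi> \<alpha>1 \<alpha>2 \<longrightarrow> arr2 A \<Phi>' \<alpha>1' \<alpha>2' \<longrightarrow> lwhisk A \<mu> \<Phi> = rwhisk A \<Phi>' \<epsilon> \<longrightarrow>
       arr1 A \<delta>1 F' G \<longrightarrow> comp1 A \<delta>1 \<epsilon> = \<alpha>1 \<longrightarrow> comp1 A \<mu> \<delta>1 = \<alpha>1' \<longrightarrow>
       arr1 A \<delta>2 F' G \<longrightarrow> comp1 A \<delta>2 \<epsilon> = \<alpha>2 \<longrightarrow> comp1 A \<mu> \<delta>2 = \<alpha>2' \<longrightarrow>
       (\<exists>!\<Delta>. arr2 A \<Delta> \<delta>1 \<delta>2 \<and> rwhisk A \<Delta> \<epsilon> = \<Phi> \<and> lwhisk A \<mu> \<Delta> = \<Phi>'))"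

definition rigid :: "('o,'m,'t,'x) twocat_scheme \<Rightarrow> 'm set \<Rightarrow> 'm set \<Rightarrow> bool" where
  "rigid A E M \<longleftrightarrow> (\<forall>\<mu>\<in>M. \<forall>\<alpha> F G. arr1 A \<mu> F G \<longrightarrow> arr1 A \<alpha> G F \<longrightarrow>
      iso2cells A (comp1 A \<mu> \<alpha>) (id1 A G) \<longrightarrow> iso2cells A (comp1 A \<alpha> \<mu>) (id1 A F))"

definition rigid_enhanced_fs :: "('o,'m,'t,'x) twocat_scheme \<Rightarrow> 'm set \<Rightarrow> 'm set \<Rightarrow> bool" where
  "rigid_enhanced_fs A E M \<longleftrightarrow> enhanced_fs A E M \<and> rigid A E M"

definition separates_parallel_pairs :: "('o,'m,'t,'x) twocat_scheme \<Rightarrow> 'm set \<Rightarrow> 'm set \<Rightarrow> bool" where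
  "separates_parallel_pairs A E M \<longleftrightarrow> (\<forall>\<alpha> \<beta> F G. arr1 A \<alpha> F G \<longrightarrow> arr1 A \<beta> F G \<longrightarrow>
      (\<exists>\<epsilon>\<in>E. tgt1 A \<epsilon> = F \<and> comp1 A \<alpha> \<epsilon> = comp1 A \<beta> \<epsilon>) \<longrightarrow>
      (\<exists>\<mu>\<in>M. src1 A \<mu> = G \<and> comp1 A \<mu> \<alpha> = comp1 A \<mu> \<beta>) \<longrightarrow> \<alpha> = \<beta>)"

definition two_epi :: "('o,'m,'t,'x) twocat_scheme \<Rightarrow> 'm \<Rightarrow> bool" where
  "two_epi A e \<longleftrightarrow> (\<forall>b b' H \<Psi> \<Psi>'. arr1 A b (tgt1 A e) H \<longrightarrow> arr1 A b' (tgt1 A e) H \<longrightarrow>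
      arr2 A \<Psi> b b' \<longrightarrow> arr2 A \<Psi>' b b' \<longrightarrow> rwhisk A \<Psi> e = rwhisk A \<Psi>' e \<longrightarrow> \<Psi> = \<Psi>')"

definition two_mono :: "('o,'m,'t,'x) twocat_scheme \<Rightarrow> 'm \<Rightarrow> bool" where
  "two_mono A m \<longleftrightarrow> (\<forall>b b' F \<Psi> \<Psi>'. arr1 A b F (src1 A m) \<longrightarrow> arr1 A b' F (src1 A m) \<longrightarrow>
      arr2 A \<Psi> b b' \<longrightarrow> arr2 A \<Psi>' b b' \<longrightarrow> lwhisk A m \<Psi> = lwhisk A m \<Psi>' \<longrightarrow> \<Psi> = \<Psi>')"

definition creates_inv2 :: "('o,'m,'t,'x) twocat_scheme \<Rightarrow> 'm \<Rightarrow> bool" where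
  "creates_inv2 A m \<longleftrightarrow> (\<forall>a b F \<Psi>. arr1 A a F (src1 A m) \<longrightarrow> arr1 A b F (src1 A m) \<longrightarrow>
      arr2 A \<Psi> (comp1 A m a) (comp1 A m b) \<longrightarrow> inv2 A \<Psi> \<longrightarrow>
      (\<exists>!\<Psi>h. arr2 A \<Psi>h a b \<and> inv2 A \<Psi>h \<and> lwhisk A m \<Psi>h = \<Psi>))"

end

theory Submission
  imports Defs
begin

text \<open>Everything is done componentwise.
  A 2-natural transformation \<open>a : F \<Rightarrow> G\<close> is factored by factoring each component
  \<open>a\<^sub>X = m\<^sub>X e\<^sub>X\<close> in \<open>D\<close>. The middle objects become a 2-functor: a 1-cell \<open>f\<close> is sent to the
  diagonal of the commutative square formed by \<open>e\<close>, \<open>m\<close>, \<open>F f\<close> and \<open>G f\<close>, which is unique because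
  \<open>(\<E>, \<M>)\<close> separates parallel pairs, and a 2-cell to the 2-cell given by axiom (iii), which is
  already determined by its whiskering with the 2-epimorphism \<open>e\<^sub>X\<close>; these uniqueness statements
  make the middle data functorial and \<open>e\<close>, \<open>m\<close> 2-natural.
  Axioms (ii) and (iii) for \<open>D\<^sup>C\<close> are solved componentwise. For (ii), whiskering the solution at
  \<open>Y\<close> by \<open>F' f\<close> and the one at \<open>X\<close> by \<open>G' f\<close> gives two solutions of one and the same problem in
  \<open>D\<close>, so they agree; the remaining modification conditions hold because the components of
  \<open>\<epsilon>\<close> are 2-epimorphisms.
  Rigidity: given \<open>\<theta> : \<mu> \<alpha> \<cong> 1\<close>, each \<open>\<mu>\<^sub>X\<close> creates \<open>\<rho>\<^sub>X : \<alpha>\<^sub>X \<mu>\<^sub>X \<cong> 1\<close> with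
  \<open>\<mu>\<^sub>X \<rho>\<^sub>X = \<theta>\<^sub>X \<mu>\<^sub>X\<close>, and these form a modification because the components of \<open>\<mu>\<close> are
  2-monomorphisms.\<close>

section \<open>Strict 2-categories\<close>

locale twocategory =
  fixes A :: "('o,'m,'t,'x) twocat_scheme"
  assumes twocat: "twocat A"
begin

text \<open>The axioms are stated verbatim as the conjuncts of \<open>twocat\<close>, so that each one is
  extracted by assumption.\<close>

lemma Hom1_Obj [rule_format]: "\<forall>f\<in>Hom1 A. src1 A f \<in> Obj A \<and> tgt1 A f \<in> Obj A"
  using twocat unfolding twocat_def by (elim conjE) assumption

lemma id1_arr1 [rule_format]: "\<forall>X\<in>Obj A. arr1 A (id1 A X) X X"
  using twocat unfolding twocat_def by (elim conjE) assumption

lemma comp1_arr1 [rule_format]: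
  "\<forall>f g X Y Z. arr1 A f X Y \<longrightarrow> arr1 A g Y Z \<longrightarrow> arr1 A (comp1 A g f) X Z"
  using twocat unfolding twocat_def by (elim conjE) assumption

lemma comp1_assoc [rule_format]:
  "\<forall>f g h W X Y Z. arr1 A f W X \<longrightarrow> arr1 A g X Y \<longrightarrow> arr1 A h Y Z \<longrightarrow>
     comp1 A h (comp1 A g f) = comp1 A (comp1 A h g) f"
  using twocat unfolding twocat_def by (elim conjE) assumption

lemma comp1_id1 [rule_format]:
  "\<forall>f X Y. arr1 A f X Y \<longrightarrow> comp1 A f (id1 A X) = f \<and> comp1 A (id1 A Y) f = f"
  using twocat unfolding twocat_def by (elim conjE) assumption

lemma Hom2_dom_cod [rule_format]:
  "\<forall>a\<in>Hom2 A. dom2 A a \<in> Hom1 A \<and> cod2 A a \<in> Hom1 A \<and>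
     src1 A (dom2 A a) = src1 A (cod2 A a) \<and> tgt1 A (dom2 A a) = tgt1 A (cod2 A a)"
  using twocat unfolding twocat_def by (elim conjE) assumption

lemma id2_arr2_Hom1 [rule_format]: "\<forall>f\<in>Hom1 A. arr2 A (id2 A f) f f"
  using twocat unfolding twocat_def by (elim conjE) assumption

lemma vcomp_arr2 [rule_format]:
  "\<forall>a b f g h. arr2 A a f g \<longrightarrow> arr2 A b g h \<longrightarrow> arr2 A (vcomp A b a) f h"
  using twocat unfolding twocat_def by (elim conjE) assumption

lemma vcomp_assoc [rule_format]:
  "\<forall>a b c f g h k. arr2 A a f g \<longrightarrow> arr2 A b g h \<longrightarrow> arr2 A c h k \<longrightarrow>
     vcomp A c (vcomp A b a) = vcomp A (vcomp A c b) a"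
  using twocat unfolding twocat_def by (elim conjE) assumption

lemma vcomp_id2 [rule_format]:
  "\<forall>a f g. arr2 A a f g \<longrightarrow> vcomp A a (id2 A f) = a \<and> vcomp A (id2 A g) a = a"
  using twocat unfolding twocat_def by (elim conjE) assumption

lemma hcomp_arr2 [rule_format]:
  "\<forall>a b f f' g g' X Y Z. arr1 A f X Y \<longrightarrow> arr1 A g Y Z \<longrightarrow> arr2 A a f f' \<longrightarrow> arr2 A b g g' \<longrightarrow>
     arr2 A (hcomp A b a) (comp1 A g f) (comp1 A g' f')"
  using twocat unfolding twocat_def by (elim conjE) assumption

lemma hcomp_assoc [rule_format]:
  "\<forall>a b c f f' g g' h h' W X Y Z. arr1 A f W X \<longrightarrow> arr1 A g X Y \<longrightarrow> arr1 A h Y Z \<longrightarrow>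
     arr2 A a f f' \<longrightarrow> arr2 A b g g' \<longrightarrow> arr2 A c h h' \<longrightarrow>
     hcomp A c (hcomp A b a) = hcomp A (hcomp A c b) a"
  using twocat unfolding twocat_def by (elim conjE) assumption

lemma hcomp_id2_id1 [rule_format]:
  "\<forall>a f f' X Y. arr1 A f X Y \<longrightarrow> arr2 A a f f' \<longrightarrow>
     hcomp A a (id2 A (id1 A X)) = a \<and> hcomp A (id2 A (id1 A Y)) a = a"
  using twocat unfolding twocat_def by (elim conjE) assumption

lemma hcomp_id2 [rule_format]:
  "\<forall>f g X Y Z. arr1 A f X Y \<longrightarrow> arr1 A g Y Z \<longrightarrow>
     hcomp A (id2 A g) (id2 A f) = id2 A (comp1 A g f)"
  using twocat unfolding twocat_def by (elim conjE) assumption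

lemma interchange [rule_format]:
  "\<forall>a a' b b' f f' f'' g g' g'' X Y Z. arr1 A f X Y \<longrightarrow> arr1 A g Y Z \<longrightarrow>
     arr2 A a f f' \<longrightarrow> arr2 A a' f' f'' \<longrightarrow> arr2 A b g g' \<longrightarrow> arr2 A b' g' g'' \<longrightarrow>
     hcomp A (vcomp A b' b) (vcomp A a' a) = vcomp A (hcomp A b' a') (hcomp A b a)"
  using twocat unfolding twocat_def by (elim conjE) assumption

lemma arr1_ObjD: "arr1 A f X Y \<Longrightarrow> X \<in> Obj A" "arr1 A f X Y \<Longrightarrow> Y \<in> Obj A"
  using Hom1_Obj unfolding arr1_def by auto

lemma comp1_id1_right: "arr1 A f X Y \<Longrightarrow> comp1 A f (id1 A X) = f"
  and comp1_id1_left: "arr1 A f X Y \<Longrightarrow> comp1 A (id1 A Y) f = f"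
  using comp1_id1 by blast+

lemma vcomp_id2_right: "arr2 A a f g \<Longrightarrow> vcomp A a (id2 A f) = a"
  and vcomp_id2_left: "arr2 A a f g \<Longrightarrow> vcomp A (id2 A g) a = a"
  using vcomp_id2 by blast+

lemma rwhisk_id1: "arr1 A f X Y \<Longrightarrow> arr2 A a f g \<Longrightarrow> rwhisk A a (id1 A X) = a"
  and lwhisk_id1: "arr1 A f X Y \<Longrightarrow> arr2 A a f g \<Longrightarrow> lwhisk A (id1 A Y) a = a"
  unfolding rwhisk_def lwhisk_def using hcomp_id2_id1 by blast+

lemma id2_arr2: "arr1 A f X Y \<Longrightarrow> arr2 A (id2 A f) f f"
  using id2_arr2_Hom1 unfolding arr1_def by blast

lemma arr2_arr1_cod: "arr2 A a f g \<Longrightarrow> arr1 A f X Y \<Longrightarrow> arr1 A g X Y"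
  using Hom2_dom_cod unfolding arr2_def arr1_def by metis

lemma rwhisk_arr2: "arr1 A e X Y \<Longrightarrow> arr1 A f Y Z \<Longrightarrow> arr2 A a f g \<Longrightarrow>
    arr2 A (rwhisk A a e) (comp1 A f e) (comp1 A g e)"
  unfolding rwhisk_def by (rule hcomp_arr2) (auto intro: id2_arr2)

lemma lwhisk_arr2: "arr1 A f X Y \<Longrightarrow> arr1 A m Y Z \<Longrightarrow> arr2 A a f g \<Longrightarrow>
    arr2 A (lwhisk A m a) (comp1 A m f) (comp1 A m g)"
  unfolding lwhisk_def by (rule hcomp_arr2) (auto intro: id2_arr2)

lemma rwhisk_rwhisk: "arr1 A e1 W X \<Longrightarrow> arr1 A e2 X Y \<Longrightarrow> arr1 A f Y Z \<Longrightarrow> arr2 A a f g \<Longrightarrow>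
    rwhisk A (rwhisk A a e2) e1 = rwhisk A a (comp1 A e2 e1)"
  unfolding rwhisk_def
  by (simp add: hcomp_assoc[of e1 W X e2 Y f Z "id2 A e1" e1 "id2 A e2" e2 a g, symmetric]
      id2_arr2 hcomp_id2)

lemma lwhisk_lwhisk: "arr1 A f X Y \<Longrightarrow> arr1 A m1 Y Z \<Longrightarrow> arr1 A m2 Z W \<Longrightarrow> arr2 A a f g \<Longrightarrow>
    lwhisk A m2 (lwhisk A m1 a) = lwhisk A (comp1 A m2 m1) a"
  unfolding lwhisk_def
  by (simp add: hcomp_assoc[of f X Y m1 Z m2 W a g "id2 A m1" m1 "id2 A m2" m2] id2_arr2 hcomp_id2)

lemma lwhisk_rwhisk: "arr1 A e W X \<Longrightarrow> arr1 A f X Y \<Longrightarrow> arr1 A m Y Z \<Longrightarrow> arr2 A a f g \<Longrightarrow>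
    lwhisk A m (rwhisk A a e) = rwhisk A (lwhisk A m a) e"
  unfolding lwhisk_def rwhisk_def
  by (simp add: hcomp_assoc[of e W X f Y m Z "id2 A e" e a g "id2 A m" m] id2_arr2)

lemma rwhisk_id2: "arr1 A e X Y \<Longrightarrow> arr1 A f Y Z \<Longrightarrow> rwhisk A (id2 A f) e = id2 A (comp1 A f e)"
  unfolding rwhisk_def by (rule hcomp_id2)

lemma lwhisk_id2: "arr1 A f X Y \<Longrightarrow> arr1 A m Y Z \<Longrightarrow> lwhisk A m (id2 A f) = id2 A (comp1 A m f)"
  unfolding lwhisk_def by (rule hcomp_id2)

lemma rwhisk_vcomp: "arr1 A e X Y \<Longrightarrow> arr1 A f Y Z \<Longrightarrow> arr2 A a f g \<Longrightarrow> arr2 A b g h \<Longrightarrow>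
    rwhisk A (vcomp A b a) e = vcomp A (rwhisk A b e) (rwhisk A a e)"
  unfolding rwhisk_def
  using interchange[of e X Y f Z "id2 A e" e "id2 A e" e a g b h]
  by (simp add: id2_arr2 vcomp_id2_right[of "id2 A e" e e])

lemma lwhisk_vcomp: "arr1 A f X Y \<Longrightarrow> arr1 A m Y Z \<Longrightarrow> arr2 A a f g \<Longrightarrow> arr2 A b g h \<Longrightarrow>
    lwhisk A m (vcomp A b a) = vcomp A (lwhisk A m b) (lwhisk A m a)"
  unfolding lwhisk_def
  using interchange[of f X Y m Z a g b h "id2 A m" m "id2 A m" m]
  by (simp add: id2_arr2 vcomp_id2_right[of "id2 A m" m m])

lemma hcomp_rwhisk: "arr1 A e W X \<Longrightarrow> arr1 A f X Y \<Longrightarrow> arr1 A g Y Z \<Longrightarrow>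
    arr2 A a f f' \<Longrightarrow> arr2 A b g g' \<Longrightarrow> hcomp A b (rwhisk A a e) = rwhisk A (hcomp A b a) e"
  unfolding rwhisk_def by (simp add: hcomp_assoc[of e W X f Y g Z "id2 A e" e a f' b g'] id2_arr2)

lemma hcomp_lwhisk: "arr1 A f W X \<Longrightarrow> arr1 A g X Y \<Longrightarrow> arr1 A m Y Z \<Longrightarrow>
    arr2 A a f f' \<Longrightarrow> arr2 A b g g' \<Longrightarrow> hcomp A (lwhisk A m b) a = lwhisk A m (hcomp A b a)"
  unfolding lwhisk_def by (simp add: hcomp_assoc[of f W X g Y m Z a f' b g' "id2 A m" m] id2_arr2)

lemma hcomp_rwhisk_lwhisk: "arr1 A f W X \<Longrightarrow> arr1 A e X Y \<Longrightarrow> arr1 A g Y Z \<Longrightarrow>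
    arr2 A a f f' \<Longrightarrow> arr2 A b g g' \<Longrightarrow> hcomp A (rwhisk A b e) a = hcomp A b (lwhisk A e a)"
  unfolding lwhisk_def rwhisk_def by (simp add: hcomp_assoc[of f W X e Y g Z a f' "id2 A e" e b g'] id2_arr2)

lemma inv2_iff: "arr2 A a f g \<Longrightarrow>
    inv2 A a \<longleftrightarrow> (\<exists>b. arr2 A b g f \<and> vcomp A b a = id2 A f \<and> vcomp A a b = id2 A g)"
  unfolding inv2_def arr2_def by auto

lemma inverse2_unique:
  assumes a: "arr2 A a f g" and b: "arr2 A b g f" and b': "arr2 A b' g f"
    and left: "vcomp A b a = id2 A f" and right: "vcomp A a b' = id2 A g"
  shows "b = b'"
proof -
  have "b = vcomp A b (vcomp A a b')" using right vcomp_id2_right[OF b] by simp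
  also have "\<dots> = vcomp A (vcomp A b a) b'" by (rule vcomp_assoc[OF b' a b])
  also have "\<dots> = b'" using left vcomp_id2_left[OF b'] by simp
  finally show ?thesis .
qed

lemma inv2_id2: "arr1 A f X Y \<Longrightarrow> inv2 A (id2 A f)"
  using inv2_iff[OF id2_arr2] vcomp_id2_right[OF id2_arr2] id2_arr2 by blast

lemma inv2_rwhisk:
  assumes e: "arr1 A e X Y" and f: "arr1 A f Y Z" and a: "arr2 A a f g" and "inv2 A a"
  shows "inv2 A (rwhisk A a e)"
proof -
  obtain b where b: "arr2 A b g f" "vcomp A b a = id2 A f" "vcomp A a b = id2 A g"
    using a \<open>inv2 A a\<close> inv2_iff by blast
  have g: "arr1 A g Y Z" using arr2_arr1_cod[OF a f] .
  show ?thesis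
    unfolding inv2_iff[OF rwhisk_arr2[OF e f a]]
    using rwhisk_arr2[OF e g b(1)] rwhisk_vcomp[OF e f a b(1)] rwhisk_vcomp[OF e g b(1) a]
      b(2,3) rwhisk_id2[OF e f] rwhisk_id2[OF e g] by auto
qed

lemma inv2_lwhisk:
  assumes f: "arr1 A f X Y" and m: "arr1 A m Y Z" and a: "arr2 A a f g" and "inv2 A a"
  shows "inv2 A (lwhisk A m a)"
proof -
  obtain b where b: "arr2 A b g f" "vcomp A b a = id2 A f" "vcomp A a b = id2 A g"
    using a \<open>inv2 A a\<close> inv2_iff by blast
  have g: "arr1 A g X Y" using arr2_arr1_cod[OF a f] .
  show ?thesis
    unfolding inv2_iff[OF lwhisk_arr2[OF f m a]]
    using lwhisk_arr2[OF g m b(1)] lwhisk_vcomp[OF f m a b(1)] lwhisk_vcomp[OF g m b(1) a]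
      b(2,3) lwhisk_id2[OF f m] lwhisk_id2[OF g m] by auto
qed

lemma whisker_inverse_eq:
  assumes a: "arr1 A a X Y" and b: "arr1 A b X Y" and k: "arr1 A k Y Z"
    and h: "arr1 A h X X'" and a': "arr1 A a' X' Z" and b': "arr1 A b' X' Z"
    and ka: "comp1 A k a = comp1 A a' h" and kb: "comp1 A k b = comp1 A b' h"
    and \<gamma>: "arr2 A \<gamma> a b" "arr2 A \<gamma>i b a" "vcomp A \<gamma>i \<gamma> = id2 A a"
    and \<gamma>': "arr2 A \<gamma>' a' b'" "arr2 A \<gamma>i' b' a'" "vcomp A \<gamma>' \<gamma>i' = id2 A b'"
    and eq: "lwhisk A k \<gamma> = rwhisk A \<gamma>' h"
  shows "lwhisk A k \<gamma>i = rwhisk A \<gamma>i' h"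
proof (rule inverse2_unique[OF lwhisk_arr2[OF a k \<gamma>(1)] lwhisk_arr2[OF b k \<gamma>(2)]])
  show "arr2 A (rwhisk A \<gamma>i' h) (comp1 A k b) (comp1 A k a)"
    using rwhisk_arr2[OF h b' \<gamma>'(2)] ka kb by simp
  show "vcomp A (lwhisk A k \<gamma>i) (lwhisk A k \<gamma>) = id2 A (comp1 A k a)"
    using lwhisk_vcomp[OF a k \<gamma>(1,2)] \<gamma>(3) lwhisk_id2[OF a k] by simp
  show "vcomp A (lwhisk A k \<gamma>) (rwhisk A \<gamma>i' h) = id2 A (comp1 A k b)"
    using eq rwhisk_vcomp[OF h b' \<gamma>'(2,1)] \<gamma>'(3) rwhisk_id2[OF h b'] kb by simp
qed

end

section \<open>The 2-category of 2-functors\<close>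

lemma triple_simps [simp]:
  "nsrc (x, y, z) = x" "ntgt (x, y, z) = y" "ncmp (x, y, z) = z"
  "F0 (x, y, z) = x" "F1 (x, y, z) = y" "F2 (x, y, z) = z"
  by (simp_all add: nsrc_def ntgt_def ncmp_def F0_def F1_def F2_def)

lemma triple_eqI:
  assumes "nsrc u = nsrc v" "ntgt u = ntgt v"
    and "ncmp u \<in> extensional S" "ncmp v \<in> extensional S"
    and "\<And>X. X \<in> S \<Longrightarrow> ncmp u X = ncmp v X"
  shows "u = v"
proof -
  have "ncmp u = ncmp v" using assms(3-) by (rule extensionalityI)
  with assms(1,2) show ?thesis by (cases u, cases v) (simp add: nsrc_def ntgt_def ncmp_def)
qed

lemma funcat_simps [simp]:
  "Obj (funcat C D) = {F. twofunctor C D F}"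
  "Hom1 (funcat C D) = {a. twonatural C D a}"
  "Hom2 (funcat C D) = {\<Gamma>. modification C D \<Gamma>}"
  "src1 (funcat C D) = nsrc" "tgt1 (funcat C D) = ntgt"
  "dom2 (funcat C D) = nsrc" "cod2 (funcat C D) = ntgt"
  "comp1 (funcat C D) b a = (nsrc a, ntgt b, \<lambda>X\<in>Obj C. comp1 D (ncmp b X) (ncmp a X))"
  "id1 (funcat C D) F = (F, F, \<lambda>X\<in>Obj C. id1 D (F0 F X))"
  "vcomp (funcat C D) \<Delta> \<Gamma> = (nsrc \<Gamma>, ntgt \<Delta>, \<lambda>X\<in>Obj C. vcomp D (ncmp \<Delta> X) (ncmp \<Gamma> X))"
  "id2 (funcat C D) a = (a, a, \<lambda>X\<in>Obj C. id2 D (ncmp a X))"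
  by (simp_all add: funcat_def)

lemma funcat_rwhisk [simp]: "rwhisk (funcat C D) \<Gamma> e =
    (comp1 (funcat C D) (nsrc \<Gamma>) e, comp1 (funcat C D) (ntgt \<Gamma>) e,
     \<lambda>X\<in>Obj C. rwhisk D (ncmp \<Gamma> X) (ncmp e X))"
  unfolding rwhisk_def by (auto simp: funcat_def intro!: restrict_ext)

lemma funcat_lwhisk [simp]: "lwhisk (funcat C D) m \<Gamma> =
    (comp1 (funcat C D) m (nsrc \<Gamma>), comp1 (funcat C D) m (ntgt \<Gamma>),
     \<lambda>X\<in>Obj C. lwhisk D (ncmp m X) (ncmp \<Gamma> X))"
  unfolding lwhisk_def by (auto simp: funcat_def intro!: restrict_ext)

lemma arr1_funcat_iff: "arr1 (funcat C D) a F G \<longleftrightarrow> twonatural C D a \<and> nsrc a = F \<and> ntgt a = G"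
  by (simp add: arr1_def)

lemma arr2_funcat_iff:
  "arr2 (funcat C D) \<Gamma> a b \<longleftrightarrow> modification C D \<Gamma> \<and> nsrc \<Gamma> = a \<and> ntgt \<Gamma> = b"
  by (simp add: arr2_def)

lemma twofunctor_iff: "twofunctor C D F \<longleftrightarrow>
    F0 F \<in> extensional (Obj C) \<and> F1 F \<in> extensional (Hom1 C) \<and> F2 F \<in> extensional (Hom2 C) \<and>
    (\<forall>X\<in>Obj C. F0 F X \<in> Obj D) \<and>
    (\<forall>f X Y. arr1 C f X Y \<longrightarrow> arr1 D (F1 F f) (F0 F X) (F0 F Y)) \<and>
    (\<forall>a f g. arr2 C a f g \<longrightarrow> arr2 D (F2 F a) (F1 F f) (F1 F g)) \<and>
    (\<forall>X\<in>Obj C. F1 F (id1 C X) = id1 D (F0 F X)) \<and>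
    (\<forall>f g X Y Z. arr1 C f X Y \<longrightarrow> arr1 C g Y Z \<longrightarrow> F1 F (comp1 C g f) = comp1 D (F1 F g) (F1 F f)) \<and>
    (\<forall>f\<in>Hom1 C. F2 F (id2 C f) = id2 D (F1 F f)) \<and>
    (\<forall>a b f g h. arr2 C a f g \<longrightarrow> arr2 C b g h \<longrightarrow> F2 F (vcomp C b a) = vcomp D (F2 F b) (F2 F a)) \<and>
    (\<forall>a b f f' g g' X Y Z. arr1 C f X Y \<longrightarrow> arr1 C g Y Z \<longrightarrow> arr2 C a f f' \<longrightarrow> arr2 C b g g' \<longrightarrow>
       F2 F (hcomp C b a) = hcomp D (F2 F b) (F2 F a))"
  by (cases F) (simp add: twofunctor_def)

lemma twonatural_iff: "twonatural C D a \<longleftrightarrow>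
    twofunctor C D (nsrc a) \<and> twofunctor C D (ntgt a) \<and> ncmp a \<in> extensional (Obj C) \<and>
    (\<forall>X\<in>Obj C. arr1 D (ncmp a X) (F0 (nsrc a) X) (F0 (ntgt a) X)) \<and>
    (\<forall>f X Y. arr1 C f X Y \<longrightarrow> comp1 D (F1 (ntgt a) f) (ncmp a X) = comp1 D (ncmp a Y) (F1 (nsrc a) f)) \<and>
    (\<forall>t f g X Y. arr1 C f X Y \<longrightarrow> arr2 C t f g \<longrightarrow>
       rwhisk D (F2 (ntgt a) t) (ncmp a X) = lwhisk D (ncmp a Y) (F2 (nsrc a) t))"
  by (simp add: twonatural_def Let_def)

lemma modification_iff: "modification C D \<Gamma> \<longleftrightarrow>
    twonatural C D (nsrc \<Gamma>) \<and> twonatural C D (ntgt \<Gamma>) \<and> nsrc (nsrc \<Gamma>) = nsrc (ntgt \<Gamma>) \<and>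
    ntgt (nsrc \<Gamma>) = ntgt (ntgt \<Gamma>) \<and> ncmp \<Gamma> \<in> extensional (Obj C) \<and>
    (\<forall>X\<in>Obj C. arr2 D (ncmp \<Gamma> X) (ncmp (nsrc \<Gamma>) X) (ncmp (ntgt \<Gamma>) X)) \<and>
    (\<forall>f X Y. arr1 C f X Y \<longrightarrow>
       lwhisk D (F1 (ntgt (nsrc \<Gamma>)) f) (ncmp \<Gamma> X) = rwhisk D (ncmp \<Gamma> Y) (F1 (nsrc (nsrc \<Gamma>)) f))"
  by (simp add: modification_def Let_def)

context
  fixes C :: "('oc,'mc,'tc,'x) twocat_scheme" and D :: "('od,'md,'td,'y) twocat_scheme"
begin

lemma twofunctor_Obj: "twofunctor C D F \<Longrightarrow> X \<in> Obj C \<Longrightarrow> F0 F X \<in> Obj D"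
  unfolding twofunctor_iff by (elim conjE) blast

lemma twofunctor_arr1: "twofunctor C D F \<Longrightarrow> arr1 C f X Y \<Longrightarrow> arr1 D (F1 F f) (F0 F X) (F0 F Y)"
  unfolding twofunctor_iff by (elim conjE) blast

lemma twofunctor_arr2: "twofunctor C D F \<Longrightarrow> arr2 C t f g \<Longrightarrow> arr2 D (F2 F t) (F1 F f) (F1 F g)"
  unfolding twofunctor_iff by (elim conjE) blast

lemma twofunctor_id1: "twofunctor C D F \<Longrightarrow> X \<in> Obj C \<Longrightarrow> F1 F (id1 C X) = id1 D (F0 F X)"
  unfolding twofunctor_iff by (elim conjE) blast

lemma twofunctor_id2: "twofunctor C D F \<Longrightarrow> f \<in> Hom1 C \<Longrightarrow> F2 F (id2 C f) = id2 D (F1 F f)"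
  unfolding twofunctor_iff by (elim conjE) blast

lemma twofunctor_comp1 [rule_format]: "twofunctor C D F \<Longrightarrow>
    \<forall>f g X Y Z. arr1 C f X Y \<longrightarrow> arr1 C g Y Z \<longrightarrow> F1 F (comp1 C g f) = comp1 D (F1 F g) (F1 F f)"
  unfolding twofunctor_iff by (elim conjE) assumption

lemma twofunctor_vcomp [rule_format]: "twofunctor C D F \<Longrightarrow>
    \<forall>a b f g h. arr2 C a f g \<longrightarrow> arr2 C b g h \<longrightarrow> F2 F (vcomp C b a) = vcomp D (F2 F b) (F2 F a)"
  unfolding twofunctor_iff by (elim conjE) assumption

lemma twofunctor_hcomp [rule_format]: "twofunctor C D F \<Longrightarrow>
    \<forall>a b f f' g g' X Y Z. arr1 C f X Y \<longrightarrow> arr1 C g Y Z \<longrightarrow> arr2 C a f f' \<longrightarrow> arr2 C b g g' \<longrightarrow>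
      F2 F (hcomp C b a) = hcomp D (F2 F b) (F2 F a)"
  unfolding twofunctor_iff by (elim conjE) assumption

lemma twonatural_src: "twonatural C D a \<Longrightarrow> twofunctor C D (nsrc a)"
  unfolding twonatural_iff by (elim conjE) blast

lemma twonatural_tgt: "twonatural C D a \<Longrightarrow> twofunctor C D (ntgt a)"
  unfolding twonatural_iff by (elim conjE) blast

lemma twonatural_extensional: "twonatural C D a \<Longrightarrow> ncmp a \<in> extensional (Obj C)"
  unfolding twonatural_iff by (elim conjE) blast

lemma twonatural_arr1:
    "twonatural C D a \<Longrightarrow> X \<in> Obj C \<Longrightarrow> arr1 D (ncmp a X) (F0 (nsrc a) X) (F0 (ntgt a) X)"
  unfolding twonatural_iff by (elim conjE) blast

lemma twonatural_naturality: "twonatural C D a \<Longrightarrow> arr1 C f X Y \<Longrightarrow>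
    comp1 D (F1 (ntgt a) f) (ncmp a X) = comp1 D (ncmp a Y) (F1 (nsrc a) f)"
  unfolding twonatural_iff by (elim conjE) blast

lemma twonatural_2naturality: "twonatural C D a \<Longrightarrow> arr1 C f X Y \<Longrightarrow> arr2 C t f g \<Longrightarrow>
    rwhisk D (F2 (ntgt a) t) (ncmp a X) = lwhisk D (ncmp a Y) (F2 (nsrc a) t)"
  unfolding twonatural_iff by (elim conjE) blast

lemma modification_src: "modification C D \<Gamma> \<Longrightarrow> twonatural C D (nsrc \<Gamma>)"
  unfolding modification_iff by (elim conjE) blast

lemma modification_tgt: "modification C D \<Gamma> \<Longrightarrow> twonatural C D (ntgt \<Gamma>)"
  unfolding modification_iff by (elim conjE) blast

lemma modification_extensional: "modification C D \<Gamma> \<Longrightarrow> ncmp \<Gamma> \<in> extensional (Obj C)"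
  unfolding modification_iff by (elim conjE) blast

lemma modification_arr2: "modification C D \<Gamma> \<Longrightarrow> X \<in> Obj C \<Longrightarrow>
    arr2 D (ncmp \<Gamma> X) (ncmp (nsrc \<Gamma>) X) (ncmp (ntgt \<Gamma>) X)"
  unfolding modification_iff by (elim conjE) blast

lemma modification_naturality: "modification C D \<Gamma> \<Longrightarrow> arr1 C f X Y \<Longrightarrow>
    lwhisk D (F1 (ntgt (nsrc \<Gamma>)) f) (ncmp \<Gamma> X) = rwhisk D (ncmp \<Gamma> Y) (F1 (nsrc (nsrc \<Gamma>)) f)"
  unfolding modification_iff by (elim conjE) blast

end

locale functor_twocategory = C: twocategory C + D: twocategory D
  for C :: "('oc,'mc,'tc,'x) twocat_scheme" and D :: "('od,'md,'td,'y) twocat_scheme"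
begin

abbreviation DC where "DC \<equiv> funcat C D"

lemma twofunctorI:
  assumes obj: "\<And>X. X \<in> Obj C \<Longrightarrow> h0 X \<in> Obj D"
    and arr1: "\<And>f X Y. arr1 C f X Y \<Longrightarrow> arr1 D (h1 f) (h0 X) (h0 Y)"
    and arr2: "\<And>t f g. arr2 C t f g \<Longrightarrow> arr2 D (h2 t) (h1 f) (h1 g)"
    and id1: "\<And>X. X \<in> Obj C \<Longrightarrow> h1 (id1 C X) = id1 D (h0 X)"
    and comp1: "\<And>f g X Y Z. arr1 C f X Y \<Longrightarrow> arr1 C g Y Z \<Longrightarrow> h1 (comp1 C g f) = comp1 D (h1 g) (h1 f)"
    and id2: "\<And>f. f \<in> Hom1 C \<Longrightarrow> h2 (id2 C f) = id2 D (h1 f)"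
    and vcomp: "\<And>s t f g h. arr2 C s f g \<Longrightarrow> arr2 C t g h \<Longrightarrow> h2 (vcomp C t s) = vcomp D (h2 t) (h2 s)"
    and hcomp: "\<And>s t f f' g g' X Y Z. arr1 C f X Y \<Longrightarrow> arr1 C g Y Z \<Longrightarrow> arr2 C s f f' \<Longrightarrow> arr2 C t g g' \<Longrightarrow>
      h2 (hcomp C t s) = hcomp D (h2 t) (h2 s)"
  shows "twofunctor C D (restrict h0 (Obj C), restrict h1 (Hom1 C), restrict h2 (Hom2 C))"
  unfolding twofunctor_iff triple_simps
proof (intro conjI allI impI ballI)
  have Hom1: "arr1 C f X Y \<Longrightarrow> f \<in> Hom1 C" for f X Y by (simp add: arr1_def)
  have Hom2: "arr2 C t f g \<Longrightarrow> t \<in> Hom2 C \<and> f \<in> Hom1 C \<and> g \<in> Hom1 C" for t f g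
    using C.Hom2_dom_cod unfolding arr2_def by blast
  show "restrict h1 (Hom1 C) (id1 C X) = id1 D (restrict h0 (Obj C) X)" if "X \<in> Obj C" for X
    using that id1 Hom1[OF C.id1_arr1] by simp
  show "arr1 D (restrict h1 (Hom1 C) f) (restrict h0 (Obj C) X) (restrict h0 (Obj C) Y)"
    if "arr1 C f X Y" for f X Y
    using that arr1 Hom1 C.arr1_ObjD by simp
  show "arr2 D (restrict h2 (Hom2 C) t) (restrict h1 (Hom1 C) f) (restrict h1 (Hom1 C) g)"
    if "arr2 C t f g" for t f g
    using that arr2 Hom2 by simp
  show "restrict h1 (Hom1 C) (comp1 C g f) = comp1 D (restrict h1 (Hom1 C) g) (restrict h1 (Hom1 C) f)"
    if "arr1 C f X Y" "arr1 C g Y Z" for f g X Y Z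
    using that comp1 Hom1 Hom1[OF C.comp1_arr1[OF that]] by simp
  show "restrict h2 (Hom2 C) (id2 C f) = id2 D (restrict h1 (Hom1 C) f)" if "f \<in> Hom1 C" for f
    using that id2 Hom2[OF C.id2_arr2_Hom1] by simp
  show "restrict h2 (Hom2 C) (vcomp C t s) = vcomp D (restrict h2 (Hom2 C) t) (restrict h2 (Hom2 C) s)"
    if "arr2 C s f g" "arr2 C t g h" for s t f g h
    using that vcomp Hom2 Hom2[OF C.vcomp_arr2[OF that]] by simp
  show "restrict h2 (Hom2 C) (hcomp C t s) = hcomp D (restrict h2 (Hom2 C) t) (restrict h2 (Hom2 C) s)"
    if "arr1 C f X Y" "arr1 C g Y Z" "arr2 C s f f'" "arr2 C t g g'" for s t f f' g g' X Y Z
    using that hcomp Hom2 Hom2[OF C.hcomp_arr2[OF that]] by simp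
qed (use obj in auto)

lemma twonaturalI:
  assumes "twofunctor C D F" "twofunctor C D G"
    and "\<And>X. X \<in> Obj C \<Longrightarrow> arr1 D (a X) (F0 F X) (F0 G X)"
    and "\<And>f X Y. arr1 C f X Y \<Longrightarrow> comp1 D (F1 G f) (a X) = comp1 D (a Y) (F1 F f)"
    and "\<And>t f g X Y. arr1 C f X Y \<Longrightarrow> arr2 C t f g \<Longrightarrow>
      rwhisk D (F2 G t) (a X) = lwhisk D (a Y) (F2 F t)"
  shows "twonatural C D (F, G, \<lambda>X\<in>Obj C. a X)"
  unfolding twonatural_iff using assms C.arr1_ObjD by simp

lemma modificationI:
  assumes "twonatural C D a" "twonatural C D b" "nsrc a = nsrc b" "ntgt a = ntgt b"
    and "\<And>X. X \<in> Obj C \<Longrightarrow> arr2 D (\<gamma> X) (ncmp a X) (ncmp b X)"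
    and "\<And>f X Y. arr1 C f X Y \<Longrightarrow> lwhisk D (F1 (ntgt a) f) (\<gamma> X) = rwhisk D (\<gamma> Y) (F1 (nsrc a) f)"
  shows "modification C D (a, b, \<lambda>X\<in>Obj C. \<gamma> X)"
  unfolding modification_iff using assms C.arr1_ObjD by simp

lemma twonatural_comp1:
  assumes a: "twonatural C D a" and b: "twonatural C D b" and ab: "ntgt a = nsrc b"
  shows "twonatural C D (comp1 DC b a)"
  unfolding funcat_simps
proof (rule twonaturalI)
  let ?F = "nsrc a" and ?G = "ntgt a" and ?H = "ntgt b"
  have F: "twofunctor C D ?F" and G: "twofunctor C D ?G" and H: "twofunctor C D ?H"
    using a b by (simp_all add: twonatural_src twonatural_tgt)
  have ax: "arr1 D (ncmp a X) (F0 ?F X) (F0 ?G X)" if "X \<in> Obj C" for X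
    using twonatural_arr1[OF a that] .
  have bx: "arr1 D (ncmp b X) (F0 ?G X) (F0 ?H X)" if "X \<in> Obj C" for X
    using twonatural_arr1[OF b that] ab by simp
  show "twofunctor C D ?F" "twofunctor C D ?H" by fact+
  show "arr1 D (comp1 D (ncmp b X) (ncmp a X)) (F0 ?F X) (F0 ?H X)" if "X \<in> Obj C" for X
    using D.comp1_arr1[OF ax[OF that] bx[OF that]] .
  fix f X Y assume f: "arr1 C f X Y"
  have X: "X \<in> Obj C" and Y: "Y \<in> Obj C" using C.arr1_ObjD[OF f] .
  note Ff = twofunctor_arr1[OF F f] and Gf = twofunctor_arr1[OF G f] and Hf = twofunctor_arr1[OF H f]
  have "comp1 D (F1 ?H f) (comp1 D (ncmp b X) (ncmp a X))
      = comp1 D (comp1 D (F1 ?H f) (ncmp b X)) (ncmp a X)"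
    using D.comp1_assoc[OF ax[OF X] bx[OF X] Hf] .
  also have "\<dots> = comp1 D (ncmp b Y) (comp1 D (F1 ?G f) (ncmp a X))"
    using twonatural_naturality[OF b f] ab D.comp1_assoc[OF ax[OF X] Gf bx[OF Y]] by simp
  also have "\<dots> = comp1 D (comp1 D (ncmp b Y) (ncmp a Y)) (F1 ?F f)"
    using twonatural_naturality[OF a f] D.comp1_assoc[OF Ff ax[OF Y] bx[OF Y]] by simp
  finally show "comp1 D (F1 ?H f) (comp1 D (ncmp b X) (ncmp a X))
      = comp1 D (comp1 D (ncmp b Y) (ncmp a Y)) (F1 ?F f)" .
  fix t g assume t: "arr2 C t f g"
  note Ft = twofunctor_arr2[OF F t] and Gt = twofunctor_arr2[OF G t] and Ht = twofunctor_arr2[OF H t]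
  have "rwhisk D (F2 ?H t) (comp1 D (ncmp b X) (ncmp a X))
      = rwhisk D (rwhisk D (F2 ?H t) (ncmp b X)) (ncmp a X)"
    using D.rwhisk_rwhisk[OF ax[OF X] bx[OF X] Hf Ht] by simp
  also have "\<dots> = lwhisk D (ncmp b Y) (rwhisk D (F2 ?G t) (ncmp a X))"
    using twonatural_2naturality[OF b f t] ab D.lwhisk_rwhisk[OF ax[OF X] Gf bx[OF Y] Gt] by simp
  also have "\<dots> = lwhisk D (comp1 D (ncmp b Y) (ncmp a Y)) (F2 ?F t)"
    using twonatural_2naturality[OF a f t] D.lwhisk_lwhisk[OF Ff ax[OF Y] bx[OF Y] Ft] by simp
  finally show "rwhisk D (F2 ?H t) (comp1 D (ncmp b X) (ncmp a X))
      = lwhisk D (comp1 D (ncmp b Y) (ncmp a Y)) (F2 ?F t)" .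
qed

lemma twonatural_id1:
  assumes F: "twofunctor C D F"
  shows "twonatural C D (id1 DC F)"
  unfolding funcat_simps
proof (rule twonaturalI)
  show "arr1 D (id1 D (F0 F X)) (F0 F X) (F0 F X)" if "X \<in> Obj C" for X
    using D.id1_arr1[OF twofunctor_Obj[OF F that]] .
  show "comp1 D (F1 F f) (id1 D (F0 F X)) = comp1 D (id1 D (F0 F Y)) (F1 F f)"
    if "arr1 C f X Y" for f X Y
    using D.comp1_id1_right D.comp1_id1_left twofunctor_arr1[OF F that] by simp
  show "rwhisk D (F2 F t) (id1 D (F0 F X)) = lwhisk D (id1 D (F0 F Y)) (F2 F t)"
    if "arr1 C f X Y" "arr2 C t f g" for t f g X Y
    using D.rwhisk_id1 D.lwhisk_id1 twofunctor_arr1[OF F that(1)] twofunctor_arr2[OF F that(2)]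
    by simp
qed (use F in simp_all)

lemma modification_inverse:
  assumes \<Gamma>: "modification C D \<Gamma>"
    and inverse: "\<And>X. X \<in> Obj C \<Longrightarrow> arr2 D (\<gamma> X) (ncmp (ntgt \<Gamma>) X) (ncmp (nsrc \<Gamma>) X) \<and>
      vcomp D (\<gamma> X) (ncmp \<Gamma> X) = id2 D (ncmp (nsrc \<Gamma>) X) \<and>
      vcomp D (ncmp \<Gamma> X) (\<gamma> X) = id2 D (ncmp (ntgt \<Gamma>) X)"
  shows "modification C D (ntgt \<Gamma>, nsrc \<Gamma>, \<lambda>X\<in>Obj C. \<gamma> X)"
proof -
  let ?a = "nsrc \<Gamma>" and ?b = "ntgt \<Gamma>"
  have a: "twonatural C D ?a" and b: "twonatural C D ?b"
    using modification_src[OF \<Gamma>] modification_tgt[OF \<Gamma>] .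
  have ab: "nsrc ?a = nsrc ?b" "ntgt ?a = ntgt ?b" using \<Gamma> unfolding modification_iff by blast+
  let ?F = "nsrc ?a" and ?K = "ntgt ?a"
  show ?thesis
  proof (rule modificationI)
    fix f X Y assume f: "arr1 C f X Y"
    have X: "X \<in> Obj C" and Y: "Y \<in> Obj C" using C.arr1_ObjD[OF f] .
    have "lwhisk D (F1 ?K f) (\<gamma> X) = rwhisk D (\<gamma> Y) (F1 ?F f)"
      using D.whisker_inverse_eq[OF twonatural_arr1[OF a X] _ twofunctor_arr1[OF twonatural_tgt[OF a] f]
          twofunctor_arr1[OF twonatural_src[OF a] f] twonatural_arr1[OF a Y] _
          twonatural_naturality[OF a f] _ modification_arr2[OF \<Gamma> X] _ _ modification_arr2[OF \<Gamma> Y]]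
        twonatural_arr1[OF b X] twonatural_arr1[OF b Y] twonatural_naturality[OF b f]
        modification_naturality[OF \<Gamma> f] inverse[OF X] inverse[OF Y] ab
      by simp
    then show "lwhisk D (F1 (ntgt ?b) f) (\<gamma> X) = rwhisk D (\<gamma> Y) (F1 (nsrc ?b) f)"
      using ab by simp
  qed (use a b ab inverse in auto)
qed

lemma inv2_funcat_iff:
  "inv2 DC \<Gamma> \<longleftrightarrow> modification C D \<Gamma> \<and> (\<forall>X\<in>Obj C. inv2 D (ncmp \<Gamma> X))"
proof
  assume inv: "inv2 DC \<Gamma>"
  then obtain \<Delta> where \<Delta>: "arr2 DC \<Delta> (ntgt \<Gamma>) (nsrc \<Gamma>)" "vcomp DC \<Delta> \<Gamma> = id2 DC (nsrc \<Gamma>)"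
    "vcomp DC \<Gamma> \<Delta> = id2 DC (ntgt \<Gamma>)" and \<Gamma>: "modification C D \<Gamma>"
    unfolding inv2_def by auto
  have "inv2 D (ncmp \<Gamma> X)" if X: "X \<in> Obj C" for X
  proof -
    have "modification C D \<Delta>" "nsrc \<Delta> = ntgt \<Gamma>" "ntgt \<Delta> = nsrc \<Gamma>"
      using \<Delta>(1) by (simp_all add: arr2_funcat_iff)
    then have "arr2 D (ncmp \<Delta> X) (ncmp (ntgt \<Gamma>) X) (ncmp (nsrc \<Gamma>) X)"
      using modification_arr2[OF _ X] by metis
    moreover have "vcomp D (ncmp \<Delta> X) (ncmp \<Gamma> X) = id2 D (ncmp (nsrc \<Gamma>) X)"
      and "vcomp D (ncmp \<Gamma> X) (ncmp \<Delta> X) = id2 D (ncmp (ntgt \<Gamma>) X)"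
      using arg_cong[OF \<Delta>(2), of "\<lambda>u. ncmp u X"] arg_cong[OF \<Delta>(3), of "\<lambda>u. ncmp u X"] X by simp_all
    ultimately show ?thesis using D.inv2_iff[OF modification_arr2[OF \<Gamma> X]] by blast
  qed
  with \<Gamma> show "modification C D \<Gamma> \<and> (\<forall>X\<in>Obj C. inv2 D (ncmp \<Gamma> X))" by blast
next
  assume "modification C D \<Gamma> \<and> (\<forall>X\<in>Obj C. inv2 D (ncmp \<Gamma> X))"
  then have \<Gamma>: "modification C D \<Gamma>" and inv: "\<forall>X\<in>Obj C. inv2 D (ncmp \<Gamma> X)" by blast+
  have "\<forall>X\<in>Obj C. \<exists>\<delta>. arr2 D \<delta> (ncmp (ntgt \<Gamma>) X) (ncmp (nsrc \<Gamma>) X) \<and>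
      vcomp D \<delta> (ncmp \<Gamma> X) = id2 D (ncmp (nsrc \<Gamma>) X) \<and> vcomp D (ncmp \<Gamma> X) \<delta> = id2 D (ncmp (ntgt \<Gamma>) X)"
    using inv D.inv2_iff[OF modification_arr2[OF \<Gamma>]] by blast
  then obtain \<gamma> where \<gamma>: "\<forall>X\<in>Obj C. arr2 D (\<gamma> X) (ncmp (ntgt \<Gamma>) X) (ncmp (nsrc \<Gamma>) X) \<and>
      vcomp D (\<gamma> X) (ncmp \<Gamma> X) = id2 D (ncmp (nsrc \<Gamma>) X) \<and> vcomp D (ncmp \<Gamma> X) (\<gamma> X) = id2 D (ncmp (ntgt \<Gamma>) X)"
    by metis
  let ?\<Delta> = "(ntgt \<Gamma>, nsrc \<Gamma>, \<lambda>X\<in>Obj C. \<gamma> X)"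
  have "modification C D ?\<Delta>" using modification_inverse[OF \<Gamma>] \<gamma> by blast
  moreover have "vcomp DC ?\<Delta> \<Gamma> = id2 DC (nsrc \<Gamma>)" "vcomp DC \<Gamma> ?\<Delta> = id2 DC (ntgt \<Gamma>)"
    using \<gamma> by (auto intro!: restrict_ext)
  ultimately show "inv2 DC \<Gamma>"
    unfolding inv2_def using \<Gamma> by (intro conjI exI[of _ ?\<Delta>]) (simp_all add: arr2_funcat_iff)
qed

lemma iso1_funcat_ncmp:
  assumes "iso1 DC a" and X: "X \<in> Obj C"
  shows "iso1 D (ncmp a X)"
proof -
  obtain b where b: "arr1 DC b (ntgt a) (nsrc a)" "comp1 DC b a = id1 DC (nsrc a)"
    "comp1 DC a b = id1 DC (ntgt a)" and a: "twonatural C D a"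
    using assms unfolding iso1_def by auto
  have "comp1 D (ncmp b X) (ncmp a X) = id1 D (F0 (nsrc a) X)"
    and "comp1 D (ncmp a X) (ncmp b X) = id1 D (F0 (ntgt a) X)"
    using arg_cong[OF b(2), of "\<lambda>u. ncmp u X"] arg_cong[OF b(3), of "\<lambda>u. ncmp u X"] X by simp_all
  moreover have "twonatural C D b" "nsrc b = ntgt a" "ntgt b = nsrc a"
    using b(1) by (simp_all add: arr1_funcat_iff)
  then have "arr1 D (ncmp b X) (F0 (ntgt a) X) (F0 (nsrc a) X)"
    using twonatural_arr1[OF _ X] by metis
  ultimately show ?thesis
    using twonatural_arr1[OF a X] unfolding iso1_def by (auto simp: arr1_def)
qed

end

section \<open>Fillers and enhanced factorization systems\<close>

text \<open>\<open>(\<delta>, \<Psi>')\<close> is a solution of axiom (ii) of \<open>enhanced_fs\<close> for the square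
  \<open>\<Psi> : \<alpha>' \<epsilon> \<Rightarrow> \<mu> \<alpha>\<close>.\<close>

definition filler ::
  "('o,'m,'t,'x) twocat_scheme \<Rightarrow> 'o \<Rightarrow> 'o \<Rightarrow> 'm \<Rightarrow> 'm \<Rightarrow> 'm \<Rightarrow> 'm \<Rightarrow> 't \<Rightarrow> 'm \<Rightarrow> 't \<Rightarrow> bool" where
  "filler A F' G \<epsilon> \<mu> \<alpha> \<alpha>' \<Psi> \<delta> \<Psi>' \<longleftrightarrow> arr1 A \<delta> F' G \<and> arr2 A \<Psi>' \<alpha>' (comp1 A \<mu> \<delta>) \<and> inv2 A \<Psi>' \<and>
     comp1 A \<delta> \<epsilon> = \<alpha> \<and> rwhisk A \<Psi>' \<epsilon> = \<Psi>"

context twocategory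
begin

lemma filler_precomp:
  assumes fill: "filler A F' G \<epsilon> \<mu> \<alpha> \<alpha>' \<Psi> \<delta> \<Psi>'"
    and \<epsilon>: "arr1 A \<epsilon> F F'" and \<mu>: "arr1 A \<mu> G G'" and \<alpha>': "arr1 A \<alpha>' F' G'"
    and u: "arr1 A u X F" and u': "arr1 A u' X' F'" and \<epsilon>0: "arr1 A \<epsilon>0 X X'"
    and square: "comp1 A \<epsilon> u = comp1 A u' \<epsilon>0"
  shows "filler A X' G \<epsilon>0 \<mu> (comp1 A \<alpha> u) (comp1 A \<alpha>' u') (rwhisk A \<Psi> u)
           (comp1 A \<delta> u') (rwhisk A \<Psi>' u')"
proof -
  from fill have \<delta>: "arr1 A \<delta> F' G" and \<Psi>': "arr2 A \<Psi>' \<alpha>' (comp1 A \<mu> \<delta>)" "inv2 A \<Psi>'"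
    and \<alpha>: "comp1 A \<delta> \<epsilon> = \<alpha>" and \<Psi>: "rwhisk A \<Psi>' \<epsilon> = \<Psi>"
    unfolding filler_def by blast+
  have "comp1 A (comp1 A \<delta> u') \<epsilon>0 = comp1 A \<delta> (comp1 A \<epsilon> u)"
    using comp1_assoc[OF \<epsilon>0 u' \<delta>] square by simp
  also have "\<dots> = comp1 A \<alpha> u" using comp1_assoc[OF u \<epsilon> \<delta>] \<alpha> by simp
  finally have "comp1 A (comp1 A \<delta> u') \<epsilon>0 = comp1 A \<alpha> u" .
  moreover have "rwhisk A (rwhisk A \<Psi>' u') \<epsilon>0 = rwhisk A \<Psi> u"
    using rwhisk_rwhisk[OF \<epsilon>0 u' \<alpha>' \<Psi>'(1)] square rwhisk_rwhisk[OF u \<epsilon> \<alpha>' \<Psi>'(1)] \<Psi> by simp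
  moreover have "arr2 A (rwhisk A \<Psi>' u') (comp1 A \<alpha>' u') (comp1 A \<mu> (comp1 A \<delta> u'))"
    using rwhisk_arr2[OF u' \<alpha>' \<Psi>'(1)] comp1_assoc[OF u' \<delta> \<mu>] by simp
  ultimately show ?thesis
    unfolding filler_def using comp1_arr1[OF u' \<delta>] inv2_rwhisk[OF u' \<alpha>' \<Psi>'] by blast
qed

lemma filler_postcomp:
  assumes fill: "filler A F' G \<epsilon> \<mu> \<alpha> \<alpha>' \<Psi> \<delta> \<Psi>'"
    and \<epsilon>: "arr1 A \<epsilon> F F'" and \<mu>: "arr1 A \<mu> G G'" and \<alpha>': "arr1 A \<alpha>' F' G'"
    and v: "arr1 A v G Y" and v': "arr1 A v' G' Y'" and \<mu>0: "arr1 A \<mu>0 Y Y'"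
    and square: "comp1 A v' \<mu> = comp1 A \<mu>0 v"
  shows "filler A F' Y \<epsilon> \<mu>0 (comp1 A v \<alpha>) (comp1 A v' \<alpha>') (lwhisk A v' \<Psi>)
           (comp1 A v \<delta>) (lwhisk A v' \<Psi>')"
proof -
  from fill have \<delta>: "arr1 A \<delta> F' G" and \<Psi>': "arr2 A \<Psi>' \<alpha>' (comp1 A \<mu> \<delta>)" "inv2 A \<Psi>'"
    and \<alpha>: "comp1 A \<delta> \<epsilon> = \<alpha>" and \<Psi>: "rwhisk A \<Psi>' \<epsilon> = \<Psi>"
    unfolding filler_def by blast+
  have "comp1 A v' (comp1 A \<mu> \<delta>) = comp1 A \<mu>0 (comp1 A v \<delta>)"
    using comp1_assoc[OF \<delta> \<mu> v'] square comp1_assoc[OF \<delta> v \<mu>0] by simp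
  then have "arr2 A (lwhisk A v' \<Psi>') (comp1 A v' \<alpha>') (comp1 A \<mu>0 (comp1 A v \<delta>))"
    using lwhisk_arr2[OF \<alpha>' v' \<Psi>'(1)] by simp
  moreover have "comp1 A (comp1 A v \<delta>) \<epsilon> = comp1 A v \<alpha>"
    using comp1_assoc[OF \<epsilon> \<delta> v] \<alpha> by simp
  moreover have "rwhisk A (lwhisk A v' \<Psi>') \<epsilon> = lwhisk A v' \<Psi>"
    using lwhisk_rwhisk[OF \<epsilon> \<alpha>' v' \<Psi>'(1)] \<Psi> by simp
  ultimately show ?thesis
    unfolding filler_def using comp1_arr1[OF \<delta> v] inv2_lwhisk[OF \<alpha>' v' \<Psi>'] by blast
qed

end

locale enhanced_factorization = twocategory A for A :: "('o,'m,'t,'x) twocat_scheme" +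
  fixes E M :: "'m set"
  assumes enhanced_fs: "enhanced_fs A E M"
begin

lemma E_Hom1: "\<epsilon> \<in> E \<Longrightarrow> \<epsilon> \<in> Hom1 A"
  using enhanced_fs unfolding enhanced_fs_def by (elim conjE) blast

lemma M_Hom1: "\<mu> \<in> M \<Longrightarrow> \<mu> \<in> Hom1 A"
  using enhanced_fs unfolding enhanced_fs_def by (elim conjE) blast

lemma iso1_E: "iso1 A f \<Longrightarrow> f \<in> E"
  using enhanced_fs unfolding enhanced_fs_def by (elim conjE) blast

lemma iso1_M: "iso1 A f \<Longrightarrow> f \<in> M"
  using enhanced_fs unfolding enhanced_fs_def by (elim conjE) blast

lemma factorization: "\<alpha> \<in> Hom1 A \<Longrightarrow> \<exists>\<epsilon>\<in>E. \<exists>\<mu>\<in>M. tgt1 A \<epsilon> = src1 A \<mu> \<and> \<alpha> = comp1 A \<mu> \<epsilon>"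
  using enhanced_fs unfolding enhanced_fs_def by (elim conjE) blast

lemma factorization_arr1:
  assumes "arr1 A \<alpha> X Y"
  obtains \<epsilon> \<mu> where "\<epsilon> \<in> E" "\<mu> \<in> M" "arr1 A \<epsilon> X (tgt1 A \<epsilon>)" "arr1 A \<mu> (tgt1 A \<epsilon>) Y"
    "\<alpha> = comp1 A \<mu> \<epsilon>"
proof -
  obtain \<epsilon> \<mu> where em: "\<epsilon> \<in> E" "\<mu> \<in> M" "tgt1 A \<epsilon> = src1 A \<mu>" "\<alpha> = comp1 A \<mu> \<epsilon>"
    using factorization assms unfolding arr1_def by blast
  have \<epsilon>: "arr1 A \<epsilon> (src1 A \<epsilon>) (tgt1 A \<epsilon>)" and \<mu>: "arr1 A \<mu> (tgt1 A \<epsilon>) (tgt1 A \<mu>)"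
    using em E_Hom1 M_Hom1 unfolding arr1_def by auto
  have "src1 A \<epsilon> = X" "tgt1 A \<mu> = Y"
    using comp1_arr1[OF \<epsilon> \<mu>] assms em(4) unfolding arr1_def by simp_all
  with that em \<epsilon> \<mu> show thesis by simp
qed

text \<open>Axioms (ii) and (iii) of \<open>enhanced_fs\<close>.\<close>

lemmas lifting_axiom = enhanced_fs[unfolded enhanced_fs_def,
  THEN conjunct2, THEN conjunct2, THEN conjunct2, THEN conjunct2, THEN conjunct2, THEN conjunct1,
  rule_format]

lemmas lifting2_axiom = enhanced_fs[unfolded enhanced_fs_def,
  THEN conjunct2, THEN conjunct2, THEN conjunct2, THEN conjunct2, THEN conjunct2, THEN conjunct2,
  rule_format]

context
  fixes \<epsilon> \<mu> F F' G G'
  assumes \<epsilon>: "\<epsilon> \<in> E" "arr1 A \<epsilon> F F'" and \<mu>: "\<mu> \<in> M" "arr1 A \<mu> G G'"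
begin

lemma filler_ex1:
  assumes "arr1 A \<alpha> F G" "arr1 A \<alpha>' F' G'" "arr2 A \<Psi> (comp1 A \<alpha>' \<epsilon>) (comp1 A \<mu> \<alpha>)" "inv2 A \<Psi>"
  shows "\<exists>!(\<delta>, \<Psi>'). filler A F' G \<epsilon> \<mu> \<alpha> \<alpha>' \<Psi> \<delta> \<Psi>'"
  using lifting_axiom[OF \<epsilon>(1) \<mu>(1) \<epsilon>(2) \<mu>(2) assms] unfolding filler_def by blast

lemma filler_unique:
  assumes "arr1 A \<alpha> F G" "arr1 A \<alpha>' F' G'" "arr2 A \<Psi> (comp1 A \<alpha>' \<epsilon>) (comp1 A \<mu> \<alpha>)" "inv2 A \<Psi>"
    and "filler A F' G \<epsilon> \<mu> \<alpha> \<alpha>' \<Psi> \<delta>1 \<Psi>1" "filler A F' G \<epsilon> \<mu> \<alpha> \<alpha>' \<Psi> \<delta>2 \<Psi>2"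
  shows "\<delta>1 = \<delta>2 \<and> \<Psi>1 = \<Psi>2"
  using filler_ex1[OF assms(1-4)] assms(5,6) by auto

lemma filler_id2:
  assumes "arr1 A \<alpha> F G" "arr1 A \<alpha>' F' G'" "comp1 A \<alpha>' \<epsilon> = comp1 A \<mu> \<alpha>"
    and "filler A F' G \<epsilon> \<mu> \<alpha> \<alpha>' (id2 A (comp1 A \<alpha>' \<epsilon>)) \<delta> \<Psi>'"
  shows "comp1 A \<mu> \<delta> = \<alpha>' \<and> \<Psi>' = id2 A \<alpha>'"
proof -
  have "arr1 A (comp1 A \<alpha>' \<epsilon>) F G'" using comp1_arr1[OF \<epsilon>(2) assms(2)] .
  then have "arr2 A (id2 A (comp1 A \<alpha>' \<epsilon>)) (comp1 A \<alpha>' \<epsilon>) (comp1 A \<mu> \<alpha>)"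
    and "inv2 A (id2 A (comp1 A \<alpha>' \<epsilon>))"
    using id2_arr2 inv2_id2 assms(3) by metis+
  then show ?thesis
    using lifting_axiom[OF \<epsilon>(1) \<mu>(1) \<epsilon>(2) \<mu>(2) assms(1,2)] assms(4) unfolding filler_def by blast
qed

lemma diagonal_exists:
  assumes \<alpha>: "arr1 A \<alpha> F G" and \<alpha>': "arr1 A \<alpha>' F' G'" and square: "comp1 A \<alpha>' \<epsilon> = comp1 A \<mu> \<alpha>"
  obtains \<delta> where "arr1 A \<delta> F' G" "comp1 A \<delta> \<epsilon> = \<alpha>" "comp1 A \<mu> \<delta> = \<alpha>'"
proof -
  have "arr1 A (comp1 A \<alpha>' \<epsilon>) F G'" using comp1_arr1[OF \<epsilon>(2) \<alpha>'] .
  then have "arr2 A (id2 A (comp1 A \<alpha>' \<epsilon>)) (comp1 A \<alpha>' \<epsilon>) (comp1 A \<mu> \<alpha>)"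
    and "inv2 A (id2 A (comp1 A \<alpha>' \<epsilon>))"
    using id2_arr2 inv2_id2 square by metis+
  then obtain \<delta> \<Psi>' where "filler A F' G \<epsilon> \<mu> \<alpha> \<alpha>' (id2 A (comp1 A \<alpha>' \<epsilon>)) \<delta> \<Psi>'"
    using filler_ex1[OF \<alpha> \<alpha>'] by blast
  with filler_id2[OF \<alpha> \<alpha>' square] show thesis
    using that unfolding filler_def by blast
qed

lemma lift2_ex1:
  assumes "arr1 A \<alpha>1 F G" "arr1 A \<alpha>2 F G" "arr1 A \<alpha>1' F' G'" "arr1 A \<alpha>2' F' G'"
    and "comp1 A \<alpha>1' \<epsilon> = comp1 A \<mu> \<alpha>1" "comp1 A \<alpha>2' \<epsilon> = comp1 A \<mu> \<alpha>2"
    and "arr2 A \<Phi> \<alpha>1 \<alpha>2" "arr2 A \<Phi>' \<alpha>1' \<alpha>2'" "lwhisk A \<mu> \<Phi> = rwhisk A \<Phi>' \<epsilon>"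
    and "arr1 A \<delta>1 F' G" "comp1 A \<delta>1 \<epsilon> = \<alpha>1" "comp1 A \<mu> \<delta>1 = \<alpha>1'"
    and "arr1 A \<delta>2 F' G" "comp1 A \<delta>2 \<epsilon> = \<alpha>2" "comp1 A \<mu> \<delta>2 = \<alpha>2'"
  shows "\<exists>!\<Delta>. arr2 A \<Delta> \<delta>1 \<delta>2 \<and> rwhisk A \<Delta> \<epsilon> = \<Phi> \<and> lwhisk A \<mu> \<Delta> = \<Phi>'"
  using lifting2_axiom[OF \<epsilon>(1) \<mu>(1) \<epsilon>(2) \<mu>(2) assms] .

end

end

section \<open>The pointwise classes on the 2-category of 2-functors\<close>

locale pointwise_factorization = functor_twocategory C D + enhanced_factorization D E M
  for C :: "('oc,'mc,'tc,'x) twocat_scheme" and D :: "('od,'md,'td,'y) twocat_scheme"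
    and E M :: "'md set" +
  assumes separates: "separates_parallel_pairs D E M"
    and E_two_epi: "\<forall>e\<in>E. two_epi D e"
    and M_two_mono: "\<forall>m\<in>M. two_mono D m"
    and M_creates_inv2: "\<forall>m\<in>M. creates_inv2 D m"
begin

lemma separates_parallel_pairsD:
  "arr1 D \<alpha> F G \<Longrightarrow> arr1 D \<beta> F G \<Longrightarrow> \<epsilon> \<in> E \<Longrightarrow> arr1 D \<epsilon> X F \<Longrightarrow> comp1 D \<alpha> \<epsilon> = comp1 D \<beta> \<epsilon> \<Longrightarrow>
    \<mu> \<in> M \<Longrightarrow> arr1 D \<mu> G Y \<Longrightarrow> comp1 D \<mu> \<alpha> = comp1 D \<mu> \<beta> \<Longrightarrow> \<alpha> = \<beta>"
  using separates unfolding separates_parallel_pairs_def arr1_def by blast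

lemma rwhisk_E_cancel:
  "e \<in> E \<Longrightarrow> arr1 D e X Y \<Longrightarrow> arr1 D b Y Z \<Longrightarrow> arr1 D b' Y Z \<Longrightarrow>
    arr2 D \<Psi> b b' \<Longrightarrow> arr2 D \<Psi>' b b' \<Longrightarrow> rwhisk D \<Psi> e = rwhisk D \<Psi>' e \<Longrightarrow> \<Psi> = \<Psi>'"
  using E_two_epi unfolding two_epi_def arr1_def by blast

lemma lwhisk_M_cancel:
  "m \<in> M \<Longrightarrow> arr1 D m Y Z \<Longrightarrow> arr1 D b X Y \<Longrightarrow> arr1 D b' X Y \<Longrightarrow>
    arr2 D \<Psi> b b' \<Longrightarrow> arr2 D \<Psi>' b b' \<Longrightarrow> lwhisk D m \<Psi> = lwhisk D m \<Psi>' \<Longrightarrow> \<Psi> = \<Psi>'"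
  using M_two_mono unfolding two_mono_def arr1_def by blast

lemma M_creates_inv2_ex1:
  "m \<in> M \<Longrightarrow> arr1 D m Y Z \<Longrightarrow> arr1 D a X Y \<Longrightarrow> arr1 D b X Y \<Longrightarrow>
    arr2 D \<Psi> (comp1 D m a) (comp1 D m b) \<Longrightarrow> inv2 D \<Psi> \<Longrightarrow>
    \<exists>!\<Psi>'. arr2 D \<Psi>' a b \<and> inv2 D \<Psi>' \<and> lwhisk D m \<Psi>' = \<Psi>"
  using M_creates_inv2 unfolding creates_inv2_def arr1_def by blast

lemma pointwise_iso1: "iso1 DC a \<Longrightarrow> a \<in> pointwise C D E" "iso1 DC a \<Longrightarrow> a \<in> pointwise C D M"
  unfolding pointwise_def using iso1_funcat_ncmp iso1_E iso1_M by (auto simp: iso1_def)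

text \<open>\<open>h0\<close>, \<open>h1\<close>, \<open>h2\<close> are the candidate middle 2-functor for componentwise factorizations
  \<open>m\<^sub>X e\<^sub>X\<close>: \<open>h1 f\<close> is a diagonal of the naturality square of \<open>f\<close> and \<open>h2 t\<close> a lift of the
  2-naturality square of \<open>t\<close>.\<close>

context
  fixes F G h0 e m h1 h2
  assumes F: "twofunctor C D F" and G: "twofunctor C D G"
    and e: "\<And>X. X \<in> Obj C \<Longrightarrow> e X \<in> E \<and> arr1 D (e X) (F0 F X) (h0 X)"
    and m: "\<And>X. X \<in> Obj C \<Longrightarrow> m X \<in> M \<and> arr1 D (m X) (h0 X) (F0 G X)"
    and h1: "\<And>f X Y. arr1 C f X Y \<Longrightarrow> arr1 D (h1 f) (h0 X) (h0 Y) \<and>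
      comp1 D (h1 f) (e X) = comp1 D (e Y) (F1 F f) \<and> comp1 D (m Y) (h1 f) = comp1 D (F1 G f) (m X)"
    and h2: "\<And>t f g X Y. arr1 C f X Y \<Longrightarrow> arr2 C t f g \<Longrightarrow> arr2 D (h2 t) (h1 f) (h1 g) \<and>
      rwhisk D (h2 t) (e X) = lwhisk D (e Y) (F2 F t) \<and> lwhisk D (m Y) (h2 t) = rwhisk D (F2 G t) (m X)"
begin

lemma middle_arr1_unique:
  assumes f: "arr1 C f X Y" and d: "arr1 D d (h0 X) (h0 Y)"
    and "comp1 D d (e X) = comp1 D (e Y) (F1 F f)" "comp1 D (m Y) d = comp1 D (F1 G f) (m X)"
  shows "h1 f = d"
  using separates_parallel_pairsD[OF conjunct1[OF h1[OF f]] d _ _ _ _ _] h1[OF f] assms(3,4)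
    e[OF C.arr1_ObjD(1)[OF f]] m[OF C.arr1_ObjD(2)[OF f]] by metis

lemma middle_arr2_unique:
  assumes f: "arr1 C f X Y" and t: "arr2 C t f g" and \<Delta>: "arr2 D \<Delta> (h1 f) (h1 g)"
    and "rwhisk D \<Delta> (e X) = lwhisk D (e Y) (F2 F t)"
  shows "h2 t = \<Delta>"
proof -
  have g: "arr1 C g X Y" using C.arr2_arr1_cod[OF t f] .
  show ?thesis
    using rwhisk_E_cancel[OF _ _ conjunct1[OF h1[OF f]] conjunct1[OF h1[OF g]] conjunct1[OF h2[OF f t]] \<Delta>]
      e[OF C.arr1_ObjD(1)[OF f]] h2[OF f t] assms(4) by metis
qed

lemma middle_id1:
  assumes X: "X \<in> Obj C"
  shows "h1 (id1 C X) = id1 D (h0 X)"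
proof (rule middle_arr1_unique[OF C.id1_arr1[OF X]])
  note eX = conjunct2[OF e[OF X]] and mX = conjunct2[OF m[OF X]]
  show "arr1 D (id1 D (h0 X)) (h0 X) (h0 X)" using D.id1_arr1 D.arr1_ObjD(2)[OF eX] by blast
  show "comp1 D (id1 D (h0 X)) (e X) = comp1 D (e X) (F1 F (id1 C X))"
    using D.comp1_id1_left[OF eX] D.comp1_id1_right[OF eX] twofunctor_id1[OF F X] by simp
  show "comp1 D (m X) (id1 D (h0 X)) = comp1 D (F1 G (id1 C X)) (m X)"
    using D.comp1_id1_left[OF mX] D.comp1_id1_right[OF mX] twofunctor_id1[OF G X] by simp
qed

lemma middle_comp1:
  assumes f: "arr1 C f X Y" and g: "arr1 C g Y Z"
  shows "h1 (comp1 C g f) = comp1 D (h1 g) (h1 f)"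
proof (rule middle_arr1_unique[OF C.comp1_arr1[OF f g]])
  have X: "X \<in> Obj C" and Y: "Y \<in> Obj C" and Z: "Z \<in> Obj C"
    using C.arr1_ObjD f g by blast+
  note eX = conjunct2[OF e[OF X]] and eY = conjunct2[OF e[OF Y]] and eZ = conjunct2[OF e[OF Z]]
  note mX = conjunct2[OF m[OF X]] and mY = conjunct2[OF m[OF Y]] and mZ = conjunct2[OF m[OF Z]]
  note Ff = twofunctor_arr1[OF F f] and Fg = twofunctor_arr1[OF F g]
  note Gf = twofunctor_arr1[OF G f] and Gg = twofunctor_arr1[OF G g]
  note hf = h1[OF f] and hg = h1[OF g]
  show "arr1 D (comp1 D (h1 g) (h1 f)) (h0 X) (h0 Z)" using D.comp1_arr1 hf hg by blast
  have "comp1 D (comp1 D (h1 g) (h1 f)) (e X) = comp1 D (h1 g) (comp1 D (e Y) (F1 F f))"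
    using D.comp1_assoc[OF eX conjunct1[OF hf] conjunct1[OF hg]] hf by simp
  also have "\<dots> = comp1 D (comp1 D (e Z) (F1 F g)) (F1 F f)"
    using D.comp1_assoc[OF Ff eY conjunct1[OF hg]] hg by simp
  also have "\<dots> = comp1 D (e Z) (F1 F (comp1 C g f))"
    using D.comp1_assoc[OF Ff Fg eZ] twofunctor_comp1[OF F f g] by simp
  finally show "comp1 D (comp1 D (h1 g) (h1 f)) (e X) = comp1 D (e Z) (F1 F (comp1 C g f))" .
  have "comp1 D (m Z) (comp1 D (h1 g) (h1 f)) = comp1 D (comp1 D (F1 G g) (m Y)) (h1 f)"
    using D.comp1_assoc[OF conjunct1[OF hf] conjunct1[OF hg] mZ] hg by simp
  also have "\<dots> = comp1 D (F1 G g) (comp1 D (F1 G f) (m X))"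
    using D.comp1_assoc[OF conjunct1[OF hf] mY Gg] hf by simp
  also have "\<dots> = comp1 D (F1 G (comp1 C g f)) (m X)"
    using D.comp1_assoc[OF mX Gf Gg] twofunctor_comp1[OF G f g] by simp
  finally show "comp1 D (m Z) (comp1 D (h1 g) (h1 f)) = comp1 D (F1 G (comp1 C g f)) (m X)" .
qed

lemma middle_id2:
  assumes f: "arr1 C f X Y"
  shows "h2 (id2 C f) = id2 D (h1 f)"
proof (rule middle_arr2_unique[OF f C.id2_arr2[OF f]])
  have X: "X \<in> Obj C" and Y: "Y \<in> Obj C" using C.arr1_ObjD f by blast+
  note eX = conjunct2[OF e[OF X]] and eY = conjunct2[OF e[OF Y]] and hf = h1[OF f]
  show "arr2 D (id2 D (h1 f)) (h1 f) (h1 f)" using D.id2_arr2 hf by blast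
  have "rwhisk D (id2 D (h1 f)) (e X) = id2 D (comp1 D (e Y) (F1 F f))"
    using D.rwhisk_id2[OF eX conjunct1[OF hf]] hf by simp
  also have "\<dots> = lwhisk D (e Y) (F2 F (id2 C f))"
    using D.lwhisk_id2[OF twofunctor_arr1[OF F f] eY] twofunctor_id2[OF F] f by (simp add: arr1_def)
  finally show "rwhisk D (id2 D (h1 f)) (e X) = lwhisk D (e Y) (F2 F (id2 C f))" .
qed

lemma middle_vcomp:
  assumes f: "arr1 C f X Y" and s: "arr2 C s f g" and t: "arr2 C t g h"
  shows "h2 (vcomp C t s) = vcomp D (h2 t) (h2 s)"
proof -
  have X: "X \<in> Obj C" and Y: "Y \<in> Obj C" using C.arr1_ObjD f by blast+
  have g: "arr1 C g X Y" using C.arr2_arr1_cod[OF s f] .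
  note eX = conjunct2[OF e[OF X]] and eY = conjunct2[OF e[OF Y]]
  note hs = h2[OF f s] and ht = h2[OF g t]
  note Ff = twofunctor_arr1[OF F f]
  show ?thesis
  proof (rule middle_arr2_unique[OF f C.vcomp_arr2[OF s t]])
    show "arr2 D (vcomp D (h2 t) (h2 s)) (h1 f) (h1 h)" using D.vcomp_arr2 hs ht by blast
    have "rwhisk D (vcomp D (h2 t) (h2 s)) (e X)
        = vcomp D (lwhisk D (e Y) (F2 F t)) (lwhisk D (e Y) (F2 F s))"
      using D.rwhisk_vcomp[OF eX conjunct1[OF h1[OF f]] conjunct1[OF hs] conjunct1[OF ht]] hs ht by simp
    also have "\<dots> = lwhisk D (e Y) (F2 F (vcomp C t s))"
      using D.lwhisk_vcomp[OF Ff eY twofunctor_arr2[OF F s] twofunctor_arr2[OF F t]]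
        twofunctor_vcomp[OF F s t] by simp
    finally show "rwhisk D (vcomp D (h2 t) (h2 s)) (e X) = lwhisk D (e Y) (F2 F (vcomp C t s))" .
  qed
qed

lemma middle_hcomp:
  assumes f: "arr1 C f X Y" and g: "arr1 C g Y Z" and s: "arr2 C s f f'" and t: "arr2 C t g g'"
  shows "h2 (hcomp C t s) = hcomp D (h2 t) (h2 s)"
proof -
  have X: "X \<in> Obj C" and Y: "Y \<in> Obj C" and Z: "Z \<in> Obj C" using C.arr1_ObjD f g by blast+
  have f': "arr1 C f' X Y" and g': "arr1 C g' Y Z" using C.arr2_arr1_cod s t f g by blast+
  note eX = conjunct2[OF e[OF X]] and eY = conjunct2[OF e[OF Y]] and eZ = conjunct2[OF e[OF Z]]
  note hf = conjunct1[OF h1[OF f]] and hg = conjunct1[OF h1[OF g]]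
  note hs = h2[OF f s] and ht = h2[OF g t]
  note Ff = twofunctor_arr1[OF F f] and Fg = twofunctor_arr1[OF F g]
  note Fs = twofunctor_arr2[OF F s] and Ft = twofunctor_arr2[OF F t]
  show ?thesis
  proof (rule middle_arr2_unique[OF C.comp1_arr1[OF f g] C.hcomp_arr2[OF f g s t]])
    show "arr2 D (hcomp D (h2 t) (h2 s)) (h1 (comp1 C g f)) (h1 (comp1 C g' f'))"
      using D.hcomp_arr2[OF hf hg conjunct1[OF hs] conjunct1[OF ht]]
        middle_comp1[OF f g] middle_comp1[OF f' g'] by simp
    have "rwhisk D (hcomp D (h2 t) (h2 s)) (e X) = hcomp D (h2 t) (lwhisk D (e Y) (F2 F s))"
      using D.hcomp_rwhisk[OF eX hf hg conjunct1[OF hs] conjunct1[OF ht]] hs by simp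
    also have "\<dots> = hcomp D (lwhisk D (e Z) (F2 F t)) (F2 F s)"
      using D.hcomp_rwhisk_lwhisk[OF Ff eY hg Fs conjunct1[OF ht]] ht by simp
    also have "\<dots> = lwhisk D (e Z) (F2 F (hcomp C t s))"
      using D.hcomp_lwhisk[OF Ff Fg eZ Fs Ft] twofunctor_hcomp[OF F f g s t] by simp
    finally show "rwhisk D (hcomp D (h2 t) (h2 s)) (e X) = lwhisk D (e Z) (F2 F (hcomp C t s))" .
  qed
qed

lemma middle_twofunctor:
  "twofunctor C D (restrict h0 (Obj C), restrict h1 (Hom1 C), restrict h2 (Hom2 C))"
proof (rule twofunctorI)
  show "h0 X \<in> Obj D" if "X \<in> Obj C" for X using D.arr1_ObjD(2) e[OF that] by blast
  show "arr1 D (h1 f) (h0 X) (h0 Y)" if "arr1 C f X Y" for f X Y using h1[OF that] by blast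
  show "arr2 D (h2 t) (h1 f) (h1 g)" if t: "arr2 C t f g" for t f g
  proof -
    have "arr1 C f (src1 C f) (tgt1 C f)"
      using t C.Hom2_dom_cod unfolding arr2_def arr1_def by blast
    then show ?thesis using h2 t by blast
  qed
  show "h2 (id2 C f) = id2 D (h1 f)" if "f \<in> Hom1 C" for f
    using middle_id2 that unfolding arr1_def by blast
  show "h2 (vcomp C t s) = vcomp D (h2 t) (h2 s)" if s: "arr2 C s f g" and "arr2 C t g h" for s t f g h
  proof -
    have "arr1 C f (src1 C f) (tgt1 C f)"
      using s C.Hom2_dom_cod unfolding arr2_def arr1_def by blast
    then show ?thesis using middle_vcomp that by blast
  qed
qed (use middle_id1 middle_comp1 middle_hcomp in blast)+

lemma twonatural_middle_left:
  "twonatural C D (F, (restrict h0 (Obj C), restrict h1 (Hom1 C), restrict h2 (Hom2 C)), \<lambda>X\<in>Obj C. e X)"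
proof (rule twonaturalI[OF F middle_twofunctor])
  fix f X Y assume f: "arr1 C f X Y"
  have "f \<in> Hom1 C" "X \<in> Obj C" "Y \<in> Obj C" using f C.arr1_ObjD unfolding arr1_def by blast+
  then show "comp1 D (F1 (restrict h0 (Obj C), restrict h1 (Hom1 C), restrict h2 (Hom2 C)) f) (e X)
      = comp1 D (e Y) (F1 F f)" using h1[OF f] by simp
  fix t g assume t: "arr2 C t f g"
  have "t \<in> Hom2 C" using t unfolding arr2_def by blast
  then show "rwhisk D (F2 (restrict h0 (Obj C), restrict h1 (Hom1 C), restrict h2 (Hom2 C)) t) (e X)
      = lwhisk D (e Y) (F2 F t)" using h2[OF f t] by simp
qed (use e in simp)

lemma twonatural_middle_right:
  "twonatural C D ((restrict h0 (Obj C), restrict h1 (Hom1 C), restrict h2 (Hom2 C)), G, \<lambda>X\<in>Obj C. m X)"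
proof (rule twonaturalI[OF middle_twofunctor G])
  fix f X Y assume f: "arr1 C f X Y"
  have "f \<in> Hom1 C" "X \<in> Obj C" "Y \<in> Obj C" using f C.arr1_ObjD unfolding arr1_def by blast+
  then show "comp1 D (F1 G f) (m X)
      = comp1 D (m Y) (F1 (restrict h0 (Obj C), restrict h1 (Hom1 C), restrict h2 (Hom2 C)) f)"
    using h1[OF f] by simp
  fix t g assume t: "arr2 C t f g"
  have "t \<in> Hom2 C" using t unfolding arr2_def by blast
  then show "rwhisk D (F2 G t) (m X)
      = lwhisk D (m Y) (F2 (restrict h0 (Obj C), restrict h1 (Hom1 C), restrict h2 (Hom2 C)) t)"
    using h2[OF f t] by simp
qed (use m in simp)

end

context
  fixes a h0 e m
  assumes a: "twonatural C D a"
    and e: "\<And>X. X \<in> Obj C \<Longrightarrow> e X \<in> E \<and> arr1 D (e X) (F0 (nsrc a) X) (h0 X)"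
    and m: "\<And>X. X \<in> Obj C \<Longrightarrow> m X \<in> M \<and> arr1 D (m X) (h0 X) (F0 (ntgt a) X)"
    and a_eq: "\<And>X. X \<in> Obj C \<Longrightarrow> ncmp a X = comp1 D (m X) (e X)"
begin

lemma factor_square:
  assumes f: "arr1 C f X Y"
  shows "comp1 D (comp1 D (F1 (ntgt a) f) (m X)) (e X) = comp1 D (m Y) (comp1 D (e Y) (F1 (nsrc a) f))"
proof -
  have X: "X \<in> Obj C" and Y: "Y \<in> Obj C" using C.arr1_ObjD f by blast+
  have "comp1 D (comp1 D (F1 (ntgt a) f) (m X)) (e X) = comp1 D (F1 (ntgt a) f) (ncmp a X)"
    using D.comp1_assoc[OF conjunct2[OF e[OF X]] conjunct2[OF m[OF X]]
        twofunctor_arr1[OF twonatural_tgt[OF a] f]] a_eq[OF X] by simp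
  also have "\<dots> = comp1 D (ncmp a Y) (F1 (nsrc a) f)" using twonatural_naturality[OF a f] .
  also have "\<dots> = comp1 D (m Y) (comp1 D (e Y) (F1 (nsrc a) f))"
    using D.comp1_assoc[OF twofunctor_arr1[OF twonatural_src[OF a] f] conjunct2[OF e[OF Y]]
        conjunct2[OF m[OF Y]]] a_eq[OF Y] by simp
  finally show ?thesis .
qed

lemma factor_2square:
  assumes f: "arr1 C f X Y" and t: "arr2 C t f g"
  shows "lwhisk D (m Y) (lwhisk D (e Y) (F2 (nsrc a) t)) = rwhisk D (rwhisk D (F2 (ntgt a) t) (m X)) (e X)"
proof -
  have X: "X \<in> Obj C" and Y: "Y \<in> Obj C" using C.arr1_ObjD f by blast+
  note F = twonatural_src[OF a] and G = twonatural_tgt[OF a]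
  have "lwhisk D (m Y) (lwhisk D (e Y) (F2 (nsrc a) t)) = lwhisk D (ncmp a Y) (F2 (nsrc a) t)"
    using D.lwhisk_lwhisk[OF twofunctor_arr1[OF F f] conjunct2[OF e[OF Y]] conjunct2[OF m[OF Y]]
        twofunctor_arr2[OF F t]] a_eq[OF Y] by simp
  also have "\<dots> = rwhisk D (F2 (ntgt a) t) (ncmp a X)" using twonatural_2naturality[OF a f t] by simp
  also have "\<dots> = rwhisk D (rwhisk D (F2 (ntgt a) t) (m X)) (e X)"
    using D.rwhisk_rwhisk[OF conjunct2[OF e[OF X]] conjunct2[OF m[OF X]] twofunctor_arr1[OF G f]
        twofunctor_arr2[OF G t]] a_eq[OF X] by simp
  finally show ?thesis .
qed

lemma middle_arr1_exists:
  assumes f: "arr1 C f X Y"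
  obtains d where "arr1 D d (h0 X) (h0 Y)" "comp1 D d (e X) = comp1 D (e Y) (F1 (nsrc a) f)"
    "comp1 D (m Y) d = comp1 D (F1 (ntgt a) f) (m X)"
proof -
  have X: "X \<in> Obj C" and Y: "Y \<in> Obj C" using C.arr1_ObjD f by blast+
  show thesis
    using diagonal_exists[OF conjunct1[OF e[OF X]] conjunct2[OF e[OF X]]
        conjunct1[OF m[OF Y]] conjunct2[OF m[OF Y]]
        D.comp1_arr1[OF twofunctor_arr1[OF twonatural_src[OF a] f] conjunct2[OF e[OF Y]]]
        D.comp1_arr1[OF conjunct2[OF m[OF X]] twofunctor_arr1[OF twonatural_tgt[OF a] f]]
        factor_square[OF f]] that by blast
qed

lemma middle_arr2_exists:
  assumes f: "arr1 C f X Y" and t: "arr2 C t f g"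
    and d: "arr1 D d (h0 X) (h0 Y)" "comp1 D d (e X) = comp1 D (e Y) (F1 (nsrc a) f)"
      "comp1 D (m Y) d = comp1 D (F1 (ntgt a) f) (m X)"
    and d': "arr1 D d' (h0 X) (h0 Y)" "comp1 D d' (e X) = comp1 D (e Y) (F1 (nsrc a) g)"
      "comp1 D (m Y) d' = comp1 D (F1 (ntgt a) g) (m X)"
  obtains \<Delta> where "arr2 D \<Delta> d d'" "rwhisk D \<Delta> (e X) = lwhisk D (e Y) (F2 (nsrc a) t)"
    "lwhisk D (m Y) \<Delta> = rwhisk D (F2 (ntgt a) t) (m X)"
proof -
  have X: "X \<in> Obj C" and Y: "Y \<in> Obj C" using C.arr1_ObjD f by blast+
  have g: "arr1 C g X Y" using C.arr2_arr1_cod[OF t f] .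
  note eX = conjunct2[OF e[OF X]] and eY = conjunct2[OF e[OF Y]]
  note mX = conjunct2[OF m[OF X]] and mY = conjunct2[OF m[OF Y]]
  note F = twonatural_src[OF a] and G = twonatural_tgt[OF a]
  note Ff = twofunctor_arr1[OF F f] and Fg = twofunctor_arr1[OF F g]
  note Gf = twofunctor_arr1[OF G f] and Gg = twofunctor_arr1[OF G g]
  show thesis
    using lift2_ex1[OF conjunct1[OF e[OF X]] eX conjunct1[OF m[OF Y]] mY
        D.comp1_arr1[OF Ff eY] D.comp1_arr1[OF Fg eY] D.comp1_arr1[OF mX Gf] D.comp1_arr1[OF mX Gg]
        factor_square[OF f] factor_square[OF g] D.lwhisk_arr2[OF Ff eY twofunctor_arr2[OF F t]]
        D.rwhisk_arr2[OF mX Gf twofunctor_arr2[OF G t]] factor_2square[OF f t] d d']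
      that by blast
qed

lemma middle_lifts_exist:
  obtains h1 h2 where
    "\<And>f X Y. arr1 C f X Y \<Longrightarrow> arr1 D (h1 f) (h0 X) (h0 Y) \<and>
       comp1 D (h1 f) (e X) = comp1 D (e Y) (F1 (nsrc a) f) \<and>
       comp1 D (m Y) (h1 f) = comp1 D (F1 (ntgt a) f) (m X)"
    "\<And>t f g X Y. arr1 C f X Y \<Longrightarrow> arr2 C t f g \<Longrightarrow> arr2 D (h2 t) (h1 f) (h1 g) \<and>
       rwhisk D (h2 t) (e X) = lwhisk D (e Y) (F2 (nsrc a) t) \<and>
       lwhisk D (m Y) (h2 t) = rwhisk D (F2 (ntgt a) t) (m X)"
proof -
  define P1 where "P1 f X Y d \<longleftrightarrow> arr1 D d (h0 X) (h0 Y) \<and>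
    comp1 D d (e X) = comp1 D (e Y) (F1 (nsrc a) f) \<and> comp1 D (m Y) d = comp1 D (F1 (ntgt a) f) (m X)"
    for f X Y d
  have "\<forall>f\<in>Hom1 C. \<exists>d. P1 f (src1 C f) (tgt1 C f) d"
    using middle_arr1_exists unfolding P1_def arr1_def by blast
  then obtain h1 where "\<forall>f\<in>Hom1 C. P1 f (src1 C f) (tgt1 C f) (h1 f)"
    using bchoice[of "Hom1 C" "\<lambda>f. P1 f (src1 C f) (tgt1 C f)"] by blast
  then have h1: "P1 f X Y (h1 f)" if "arr1 C f X Y" for f X Y
    using that unfolding arr1_def by blast
  define P2 where "P2 t f g X Y \<Delta> \<longleftrightarrow> arr2 D \<Delta> (h1 f) (h1 g) \<and>
    rwhisk D \<Delta> (e X) = lwhisk D (e Y) (F2 (nsrc a) t) \<and> lwhisk D (m Y) \<Delta> = rwhisk D (F2 (ntgt a) t) (m X)"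
    for t f g X Y \<Delta>
  have "\<exists>\<Delta>. P2 t f g X Y \<Delta>" if "arr1 C f X Y" "arr2 C t f g" for t f g X Y
    using middle_arr2_exists[OF that] h1[OF that(1)] h1[OF C.arr2_arr1_cod[OF that(2,1)]]
    unfolding P1_def P2_def by metis
  then have "\<forall>t\<in>Hom2 C. \<exists>\<Delta>. P2 t (dom2 C t) (cod2 C t) (src1 C (dom2 C t)) (tgt1 C (dom2 C t)) \<Delta>"
    using C.Hom2_dom_cod unfolding arr1_def arr2_def by blast
  then obtain h2 where "\<forall>t\<in>Hom2 C. P2 t (dom2 C t) (cod2 C t) (src1 C (dom2 C t)) (tgt1 C (dom2 C t)) (h2 t)"
    by (auto dest!: bchoice)
  then have h2: "P2 t f g X Y (h2 t)" if "arr1 C f X Y" "arr2 C t f g" for t f g X Y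
    using that unfolding arr1_def arr2_def by blast
  show thesis by (rule that) (use h1 h2 in \<open>simp_all add: P1_def P2_def\<close>)
qed

end

lemma funcat_factorization:
  assumes "a \<in> Hom1 DC"
  shows "\<exists>\<epsilon>\<in>pointwise C D E. \<exists>\<mu>\<in>pointwise C D M. tgt1 DC \<epsilon> = src1 DC \<mu> \<and> a = comp1 DC \<mu> \<epsilon>"
proof -
  have a: "twonatural C D a" using assms by simp
  have "\<forall>X\<in>Obj C. \<exists>e m. e \<in> E \<and> arr1 D e (F0 (nsrc a) X) (tgt1 D e) \<and>
      m \<in> M \<and> arr1 D m (tgt1 D e) (F0 (ntgt a) X) \<and> ncmp a X = comp1 D m e"
    using factorization_arr1[OF twonatural_arr1[OF a]] by blast
  then obtain e where "\<forall>X\<in>Obj C. \<exists>m. e X \<in> E \<and> arr1 D (e X) (F0 (nsrc a) X) (tgt1 D (e X)) \<and>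
      m \<in> M \<and> arr1 D m (tgt1 D (e X)) (F0 (ntgt a) X) \<and> ncmp a X = comp1 D m (e X)"
    by (rule bchoice[THEN exE])
  then obtain m where em: "\<forall>X\<in>Obj C. e X \<in> E \<and> arr1 D (e X) (F0 (nsrc a) X) (tgt1 D (e X)) \<and>
      m X \<in> M \<and> arr1 D (m X) (tgt1 D (e X)) (F0 (ntgt a) X) \<and> ncmp a X = comp1 D (m X) (e X)"
    by (metis bchoice)
  let ?h0 = "\<lambda>X. tgt1 D (e X)"
  have e: "\<And>X. X \<in> Obj C \<Longrightarrow> e X \<in> E \<and> arr1 D (e X) (F0 (nsrc a) X) (?h0 X)"
    and m: "\<And>X. X \<in> Obj C \<Longrightarrow> m X \<in> M \<and> arr1 D (m X) (?h0 X) (F0 (ntgt a) X)"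
    using em by blast+
  obtain h1 h2 where h1: "\<And>f X Y. arr1 C f X Y \<Longrightarrow> arr1 D (h1 f) (?h0 X) (?h0 Y) \<and>
       comp1 D (h1 f) (e X) = comp1 D (e Y) (F1 (nsrc a) f) \<and>
       comp1 D (m Y) (h1 f) = comp1 D (F1 (ntgt a) f) (m X)"
    and h2: "\<And>t f g X Y. arr1 C f X Y \<Longrightarrow> arr2 C t f g \<Longrightarrow> arr2 D (h2 t) (h1 f) (h1 g) \<and>
       rwhisk D (h2 t) (e X) = lwhisk D (e Y) (F2 (nsrc a) t) \<and>
       lwhisk D (m Y) (h2 t) = rwhisk D (F2 (ntgt a) t) (m X)"
    using middle_lifts_exist[OF a e m] em by blast
  note middle = twonatural_middle_left[OF twonatural_src[OF a] twonatural_tgt[OF a] e m h1 h2]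
    twonatural_middle_right[OF twonatural_src[OF a] twonatural_tgt[OF a] e m h1 h2]
  let ?H = "(restrict ?h0 (Obj C), restrict h1 (Hom1 C), restrict h2 (Hom2 C))"
  show ?thesis
  proof (intro bexI conjI)
    show "(nsrc a, ?H, \<lambda>X\<in>Obj C. e X) \<in> pointwise C D E"
      and "(?H, ntgt a, \<lambda>X\<in>Obj C. m X) \<in> pointwise C D M"
      using middle em unfolding pointwise_def by auto
    show "a = comp1 DC (?H, ntgt a, \<lambda>X\<in>Obj C. m X) (nsrc a, ?H, \<lambda>X\<in>Obj C. e X)"
      by (rule triple_eqI[where S = "Obj C"]) (use em twonatural_extensional[OF a] in simp_all)
  qed simp
qed

context
  fixes \<epsilon> \<mu> \<alpha> \<alpha>' \<Psi> F F' G G'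
  assumes pointwise: "\<epsilon> \<in> pointwise C D E" "\<mu> \<in> pointwise C D M"
    and \<epsilon>: "arr1 DC \<epsilon> F F'" and \<mu>: "arr1 DC \<mu> G G'"
    and \<alpha>: "arr1 DC \<alpha> F G" and \<alpha>': "arr1 DC \<alpha>' F' G'"
    and \<Psi>: "arr2 DC \<Psi> (comp1 DC \<alpha>' \<epsilon>) (comp1 DC \<mu> \<alpha>)" "inv2 DC \<Psi>"
begin

lemma square_twonatural:
  "twonatural C D \<epsilon>" "twonatural C D \<mu>" "twonatural C D \<alpha>" "twonatural C D \<alpha>'"
  "nsrc \<epsilon> = F" "ntgt \<epsilon> = F'" "nsrc \<mu> = G" "ntgt \<mu> = G'" "nsrc \<alpha> = F" "ntgt \<alpha> = G"
  "nsrc \<alpha>' = F'" "ntgt \<alpha>' = G'"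
  using \<epsilon> \<mu> \<alpha> \<alpha>' by (simp_all add: arr1_funcat_iff)

lemma square_twofunctor:
  "twofunctor C D F" "twofunctor C D F'" "twofunctor C D G" "twofunctor C D G'"
  using square_twonatural twonatural_src twonatural_tgt by metis+

lemma square_modification: "modification C D \<Psi>" "nsrc \<Psi> = comp1 DC \<alpha>' \<epsilon>" "ntgt \<Psi> = comp1 DC \<mu> \<alpha>"
  using \<Psi>(1) by (simp_all add: arr2_funcat_iff)

lemma square_components:
  assumes X: "X \<in> Obj C"
  shows "ncmp \<epsilon> X \<in> E" "arr1 D (ncmp \<epsilon> X) (F0 F X) (F0 F' X)"
    "ncmp \<mu> X \<in> M" "arr1 D (ncmp \<mu> X) (F0 G X) (F0 G' X)"
    "arr1 D (ncmp \<alpha> X) (F0 F X) (F0 G X)" "arr1 D (ncmp \<alpha>' X) (F0 F' X) (F0 G' X)"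
    "arr2 D (ncmp \<Psi> X) (comp1 D (ncmp \<alpha>' X) (ncmp \<epsilon> X)) (comp1 D (ncmp \<mu> X) (ncmp \<alpha> X))"
    "inv2 D (ncmp \<Psi> X)"
  using pointwise X twonatural_arr1[OF square_twonatural(1) X] twonatural_arr1[OF square_twonatural(2) X]
    twonatural_arr1[OF square_twonatural(3) X] twonatural_arr1[OF square_twonatural(4) X]
    modification_arr2[OF square_modification(1) X] square_modification \<Psi>(2)
  by (simp_all add: pointwise_def square_twonatural inv2_funcat_iff)

abbreviation component_filler where
  "component_filler X \<equiv> filler D (F0 F' X) (F0 G X) (ncmp \<epsilon> X) (ncmp \<mu> X) (ncmp \<alpha> X) (ncmp \<alpha>' X) (ncmp \<Psi> X)"

lemma component_filler_ex1: "X \<in> Obj C \<Longrightarrow> \<exists>!(\<delta>, \<Psi>'). component_filler X \<delta> \<Psi>'"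
  by (rule filler_ex1[OF square_components])

text \<open>Both sides solve axiom (ii) for the square at \<open>Y\<close> precomposed with \<open>F f\<close>, which by
  naturality is the square at \<open>X\<close> postcomposed with \<open>G' f\<close>.\<close>

lemma component_fillers_natural:
  assumes fill: "\<And>X. X \<in> Obj C \<Longrightarrow> component_filler X (\<delta> X) (P X)" and f: "arr1 C f X Y"
  shows "comp1 D (\<delta> Y) (F1 F' f) = comp1 D (F1 G f) (\<delta> X) \<and>
    rwhisk D (P Y) (F1 F' f) = lwhisk D (F1 G' f) (P X)"
proof -
  have X: "X \<in> Obj C" and Y: "Y \<in> Obj C" using C.arr1_ObjD f by blast+
  note cX = square_components[OF X] and cY = square_components[OF Y]
  note Ff = twofunctor_arr1[OF square_twofunctor(1) f] and F'f = twofunctor_arr1[OF square_twofunctor(2) f]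
  note Gf = twofunctor_arr1[OF square_twofunctor(3) f] and G'f = twofunctor_arr1[OF square_twofunctor(4) f]
  have \<epsilon>_nat: "comp1 D (ncmp \<epsilon> Y) (F1 F f) = comp1 D (F1 F' f) (ncmp \<epsilon> X)"
    and \<mu>_nat: "comp1 D (F1 G' f) (ncmp \<mu> X) = comp1 D (ncmp \<mu> Y) (F1 G f)"
    and \<alpha>_nat: "comp1 D (F1 G f) (ncmp \<alpha> X) = comp1 D (ncmp \<alpha> Y) (F1 F f)"
    and \<alpha>'_nat: "comp1 D (F1 G' f) (ncmp \<alpha>' X) = comp1 D (ncmp \<alpha>' Y) (F1 F' f)"
    using twonatural_naturality[OF square_twonatural(1) f] twonatural_naturality[OF square_twonatural(2) f]
      twonatural_naturality[OF square_twonatural(3) f] twonatural_naturality[OF square_twonatural(4) f]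
    by (simp_all add: square_twonatural)
  have \<Psi>_nat: "lwhisk D (F1 G' f) (ncmp \<Psi> X) = rwhisk D (ncmp \<Psi> Y) (F1 F f)"
    using modification_naturality[OF square_modification(1) f] by (simp add: square_modification square_twonatural)
  have left: "component_filler Y (\<delta> Y) (P Y) \<Longrightarrow> filler D (F0 F' X) (F0 G Y) (ncmp \<epsilon> X) (ncmp \<mu> Y)
      (comp1 D (ncmp \<alpha> Y) (F1 F f)) (comp1 D (ncmp \<alpha>' Y) (F1 F' f)) (rwhisk D (ncmp \<Psi> Y) (F1 F f))
      (comp1 D (\<delta> Y) (F1 F' f)) (rwhisk D (P Y) (F1 F' f))"
    by (rule D.filler_precomp[OF _ cY(2,4,6) Ff F'f cX(2) \<epsilon>_nat])
  have right: "component_filler X (\<delta> X) (P X) \<Longrightarrow> filler D (F0 F' X) (F0 G Y) (ncmp \<epsilon> X) (ncmp \<mu> Y)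
      (comp1 D (F1 G f) (ncmp \<alpha> X)) (comp1 D (F1 G' f) (ncmp \<alpha>' X)) (lwhisk D (F1 G' f) (ncmp \<Psi> X))
      (comp1 D (F1 G f) (\<delta> X)) (lwhisk D (F1 G' f) (P X))"
    by (rule D.filler_postcomp[OF _ cX(2,4,6) Gf G'f cY(4) \<mu>_nat])
  have "comp1 D (comp1 D (ncmp \<alpha>' Y) (ncmp \<epsilon> Y)) (F1 F f)
      = comp1 D (comp1 D (ncmp \<alpha>' Y) (F1 F' f)) (ncmp \<epsilon> X)"
    using D.comp1_assoc[OF Ff cY(2) cY(6)] \<epsilon>_nat D.comp1_assoc[OF cX(2) F'f cY(6)] by simp
  moreover have "comp1 D (comp1 D (ncmp \<mu> Y) (ncmp \<alpha> Y)) (F1 F f)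
      = comp1 D (ncmp \<mu> Y) (comp1 D (ncmp \<alpha> Y) (F1 F f))"
    using D.comp1_assoc[OF Ff cY(5) cY(4)] by simp
  ultimately have \<Psi>_f: "arr2 D (rwhisk D (ncmp \<Psi> Y) (F1 F f))
      (comp1 D (comp1 D (ncmp \<alpha>' Y) (F1 F' f)) (ncmp \<epsilon> X)) (comp1 D (ncmp \<mu> Y) (comp1 D (ncmp \<alpha> Y) (F1 F f)))"
    using D.rwhisk_arr2[OF Ff D.comp1_arr1[OF cY(2) cY(6)] cY(7)] by simp
  show ?thesis
    using filler_unique[OF cX(1,2) cY(3,4) D.comp1_arr1[OF Ff cY(5)] D.comp1_arr1[OF F'f cY(6)] \<Psi>_f
        D.inv2_rwhisk[OF Ff D.comp1_arr1[OF cY(2) cY(6)] cY(7,8)] left[OF fill[OF Y]]]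
      right[OF fill[OF X]] \<alpha>_nat \<alpha>'_nat \<Psi>_nat by simp
qed

lemma component_fillers_2natural:
  assumes fill: "\<And>X. X \<in> Obj C \<Longrightarrow> component_filler X (\<delta> X) (P X)"
    and f: "arr1 C f X Y" and t: "arr2 C t f g"
  shows "rwhisk D (F2 G t) (\<delta> X) = lwhisk D (\<delta> Y) (F2 F' t)"
proof -
  have X: "X \<in> Obj C" and Y: "Y \<in> Obj C" using C.arr1_ObjD f by blast+
  have g: "arr1 C g X Y" using C.arr2_arr1_cod[OF t f] .
  note cX = square_components[OF X] and cY = square_components[OF Y]
  have \<delta>X: "arr1 D (\<delta> X) (F0 F' X) (F0 G X)" "comp1 D (\<delta> X) (ncmp \<epsilon> X) = ncmp \<alpha> X"
    and \<delta>Y: "arr1 D (\<delta> Y) (F0 F' Y) (F0 G Y)" "comp1 D (\<delta> Y) (ncmp \<epsilon> Y) = ncmp \<alpha> Y"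
    using fill[OF X] fill[OF Y] unfolding filler_def by blast+
  note Ff = twofunctor_arr1[OF square_twofunctor(1) f] and F'f = twofunctor_arr1[OF square_twofunctor(2) f]
  note Gf = twofunctor_arr1[OF square_twofunctor(3) f] and Gg = twofunctor_arr1[OF square_twofunctor(3) g]
  note Ft = twofunctor_arr2[OF square_twofunctor(1) t] and F't = twofunctor_arr2[OF square_twofunctor(2) t]
  note Gt = twofunctor_arr2[OF square_twofunctor(3) t]
  have \<alpha>_2nat: "rwhisk D (F2 G t) (ncmp \<alpha> X) = lwhisk D (ncmp \<alpha> Y) (F2 F t)"
    and \<epsilon>_2nat: "rwhisk D (F2 F' t) (ncmp \<epsilon> X) = lwhisk D (ncmp \<epsilon> Y) (F2 F t)"
    using twonatural_2naturality[OF square_twonatural(3) f t] twonatural_2naturality[OF square_twonatural(1) f t]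
    by (simp_all add: square_twonatural)
  have left: "arr2 D (rwhisk D (F2 G t) (\<delta> X)) (comp1 D (F1 G f) (\<delta> X)) (comp1 D (F1 G g) (\<delta> X))"
    using D.rwhisk_arr2[OF \<delta>X(1) Gf Gt] .
  have right: "arr2 D (lwhisk D (\<delta> Y) (F2 F' t)) (comp1 D (F1 G f) (\<delta> X)) (comp1 D (F1 G g) (\<delta> X))"
    using D.lwhisk_arr2[OF F'f \<delta>Y(1) F't] component_fillers_natural[OF fill f]
      component_fillers_natural[OF fill g] by simp
  have "rwhisk D (rwhisk D (F2 G t) (\<delta> X)) (ncmp \<epsilon> X) = lwhisk D (ncmp \<alpha> Y) (F2 F t)"
    using D.rwhisk_rwhisk[OF cX(2) \<delta>X(1) Gf Gt] \<delta>X(2) \<alpha>_2nat by simp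
  moreover have "rwhisk D (lwhisk D (\<delta> Y) (F2 F' t)) (ncmp \<epsilon> X) = lwhisk D (ncmp \<alpha> Y) (F2 F t)"
    using D.lwhisk_rwhisk[OF cX(2) F'f \<delta>Y(1) F't] \<epsilon>_2nat D.lwhisk_lwhisk[OF Ff cY(2) \<delta>Y(1) Ft] \<delta>Y(2)
    by simp
  ultimately show ?thesis
    using rwhisk_E_cancel[OF cX(1,2) D.comp1_arr1[OF \<delta>X(1) Gf] D.comp1_arr1[OF \<delta>X(1) Gg] left right] by simp
qed

lemma funcat_filler_components:
  assumes "filler DC F' G \<epsilon> \<mu> \<alpha> \<alpha>' \<Psi> \<delta> P" and X: "X \<in> Obj C"
  shows "component_filler X (ncmp \<delta> X) (ncmp P X)"
proof -
  from assms(1) have \<delta>: "twonatural C D \<delta>" "nsrc \<delta> = F'" "ntgt \<delta> = G"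
    and P: "modification C D P" "nsrc P = \<alpha>'" "ntgt P = comp1 DC \<mu> \<delta>" "inv2 DC P"
    and eqs: "comp1 DC \<delta> \<epsilon> = \<alpha>" "rwhisk DC P \<epsilon> = \<Psi>"
    unfolding filler_def arr1_funcat_iff arr2_funcat_iff by blast+
  show ?thesis
    unfolding filler_def
    using twonatural_arr1[OF \<delta>(1) X] modification_arr2[OF P(1) X] P(4)
      arg_cong[OF eqs(1), of "\<lambda>u. ncmp u X"] arg_cong[OF eqs(2), of "\<lambda>u. ncmp u X"] X \<delta> P(2,3)
    by (simp add: inv2_funcat_iff)
qed

lemma twonatural_component_fillers:
  assumes fill: "\<And>X. X \<in> Obj C \<Longrightarrow> component_filler X (\<delta> X) (P X)"
  shows "twonatural C D (F', G, \<lambda>X\<in>Obj C. \<delta> X)"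
proof (rule twonaturalI[OF square_twofunctor(2,3)])
  show "arr1 D (\<delta> X) (F0 F' X) (F0 G X)" if "X \<in> Obj C" for X
    using fill[OF that] unfolding filler_def by blast
qed (use component_fillers_natural[OF fill] component_fillers_2natural[OF fill] in auto)

lemma modification_component_fillers:
  assumes fill: "\<And>X. X \<in> Obj C \<Longrightarrow> component_filler X (\<delta> X) (P X)"
  shows "modification C D (\<alpha>', comp1 DC \<mu> (F', G, \<lambda>X\<in>Obj C. \<delta> X), \<lambda>X\<in>Obj C. P X)"
proof (rule modificationI)
  show "twonatural C D (comp1 DC \<mu> (F', G, \<lambda>X\<in>Obj C. \<delta> X))"
    using twonatural_comp1[OF twonatural_component_fillers[OF fill] square_twonatural(2)]
    by (simp add: square_twonatural)
  show "arr2 D (P X) (ncmp \<alpha>' X) (ncmp (comp1 DC \<mu> (F', G, \<lambda>X\<in>Obj C. \<delta> X)) X)" if "X \<in> Obj C" for X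
    using fill[OF that] that unfolding filler_def by simp
  show "lwhisk D (F1 (ntgt \<alpha>') f) (P X) = rwhisk D (P Y) (F1 (nsrc \<alpha>') f)" if "arr1 C f X Y" for f X Y
    using component_fillers_natural[OF fill that] by (simp add: square_twonatural)
qed (simp_all add: square_twonatural)

lemma funcat_filler_of_components:
  assumes fill: "\<And>X. X \<in> Obj C \<Longrightarrow> component_filler X (\<delta> X) (P X)"
  shows "filler DC F' G \<epsilon> \<mu> \<alpha> \<alpha>' \<Psi> (F', G, \<lambda>X\<in>Obj C. \<delta> X)
    (\<alpha>', comp1 DC \<mu> (F', G, \<lambda>X\<in>Obj C. \<delta> X), \<lambda>X\<in>Obj C. P X)"
proof -
  let ?\<delta> = "(F', G, \<lambda>X\<in>Obj C. \<delta> X)"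
  have comps: "arr1 D (\<delta> X) (F0 F' X) (F0 G X)" "inv2 D (P X)"
      "comp1 D (\<delta> X) (ncmp \<epsilon> X) = ncmp \<alpha> X" "rwhisk D (P X) (ncmp \<epsilon> X) = ncmp \<Psi> X"
    if "X \<in> Obj C" for X
    using fill[OF that] unfolding filler_def by blast+
  have \<delta>\<epsilon>: "comp1 DC ?\<delta> \<epsilon> = \<alpha>"
    by (rule triple_eqI[where S = "Obj C"])
      (use comps(3) in \<open>simp_all add: square_twonatural twonatural_extensional[OF square_twonatural(3)]\<close>)
  have \<mu>\<delta>\<epsilon>: "comp1 DC (comp1 DC \<mu> ?\<delta>) \<epsilon> = comp1 DC \<mu> \<alpha>"
  proof (rule triple_eqI[where S = "Obj C"])
    show "ncmp (comp1 DC (comp1 DC \<mu> ?\<delta>) \<epsilon>) X = ncmp (comp1 DC \<mu> \<alpha>) X" if "X \<in> Obj C" for X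
      using comps(3)[OF that] that
        D.comp1_assoc[OF square_components(2)[OF that] comps(1)[OF that] square_components(4)[OF that]]
      by simp
  qed (simp_all add: square_twonatural)
  have "rwhisk DC (\<alpha>', comp1 DC \<mu> ?\<delta>, \<lambda>X\<in>Obj C. P X) \<epsilon> = \<Psi>"
    by (rule triple_eqI[where S = "Obj C"])
      (use comps(4) \<mu>\<delta>\<epsilon> square_modification modification_extensional[OF square_modification(1)] in simp_all)
  with \<delta>\<epsilon> show ?thesis
    unfolding filler_def
    using twonatural_component_fillers[OF fill] modification_component_fillers[OF fill] comps(2)
    by (simp add: arr1_funcat_iff arr2_funcat_iff inv2_funcat_iff del: funcat_simps funcat_rwhisk)
qed

lemma funcat_filler_unique:
  assumes fill1: "filler DC F' G \<epsilon> \<mu> \<alpha> \<alpha>' \<Psi> \<delta>1 P1" and fill2: "filler DC F' G \<epsilon> \<mu> \<alpha> \<alpha>' \<Psi> \<delta>2 P2"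
  shows "\<delta>1 = \<delta>2 \<and> P1 = P2"
proof -
  have eq: "ncmp \<delta>1 X = ncmp \<delta>2 X \<and> ncmp P1 X = ncmp P2 X" if "X \<in> Obj C" for X
    using filler_unique[OF square_components[OF that] funcat_filler_components[OF fill1 that]
        funcat_filler_components[OF fill2 that]] .
  have \<delta>: "twonatural C D \<delta>1" "nsrc \<delta>1 = F'" "ntgt \<delta>1 = G"
      "twonatural C D \<delta>2" "nsrc \<delta>2 = F'" "ntgt \<delta>2 = G"
    and P: "modification C D P1" "nsrc P1 = \<alpha>'" "ntgt P1 = comp1 DC \<mu> \<delta>1"
      "modification C D P2" "nsrc P2 = \<alpha>'" "ntgt P2 = comp1 DC \<mu> \<delta>2"
    using fill1 fill2 unfolding filler_def arr1_funcat_iff arr2_funcat_iff by blast+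
  have "\<delta>1 = \<delta>2"
    by (rule triple_eqI[where S = "Obj C"]) (use eq \<delta> twonatural_extensional in simp_all)
  moreover have "P1 = P2"
    by (rule triple_eqI[where S = "Obj C"])
      (use eq P \<open>\<delta>1 = \<delta>2\<close> modification_extensional[OF P(1)] modification_extensional[OF P(4)] in simp_all)
  ultimately show ?thesis ..
qed

lemma funcat_filler_ex1: "\<exists>!(\<delta>, P). filler DC F' G \<epsilon> \<mu> \<alpha> \<alpha>' \<Psi> \<delta> P"
proof -
  have "\<forall>X\<in>Obj C. \<exists>p. component_filler X (fst p) (snd p)"
    using component_filler_ex1 by fastforce
  then obtain p where "\<forall>X\<in>Obj C. component_filler X (fst (p X)) (snd (p X))"
    by (rule bchoice[THEN exE])
  then have "filler DC F' G \<epsilon> \<mu> \<alpha> \<alpha>' \<Psi> (F', G, \<lambda>X\<in>Obj C. fst (p X))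
      (\<alpha>', comp1 DC \<mu> (F', G, \<lambda>X\<in>Obj C. fst (p X)), \<lambda>X\<in>Obj C. snd (p X))"
    by (intro funcat_filler_of_components) blast
  then show ?thesis using funcat_filler_unique by blast
qed

lemma funcat_filler_id2:
  assumes "\<Psi> = id2 DC (comp1 DC \<alpha>' \<epsilon>)" and fill: "filler DC F' G \<epsilon> \<mu> \<alpha> \<alpha>' \<Psi> \<delta> P"
  shows "comp1 DC \<mu> \<delta> = \<alpha>' \<and> P = id2 DC \<alpha>'"
proof -
  have comps: "comp1 D (ncmp \<mu> X) (ncmp \<delta> X) = ncmp \<alpha>' X \<and> ncmp P X = id2 D (ncmp \<alpha>' X)"
    if X: "X \<in> Obj C" for X
  proof (rule filler_id2[OF square_components(1-6)[OF X]])
    have "ntgt \<Psi> = comp1 DC \<alpha>' \<epsilon>" using assms(1) by simp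
    then show square: "comp1 D (ncmp \<alpha>' X) (ncmp \<epsilon> X) = comp1 D (ncmp \<mu> X) (ncmp \<alpha> X)"
      using arg_cong[OF square_modification(3), of "\<lambda>u. ncmp u X"] X by simp
    show "filler D (F0 F' X) (F0 G X) (ncmp \<epsilon> X) (ncmp \<mu> X) (ncmp \<alpha> X) (ncmp \<alpha>' X)
        (id2 D (comp1 D (ncmp \<alpha>' X) (ncmp \<epsilon> X))) (ncmp \<delta> X) (ncmp P X)"
    proof -
      have "ncmp \<Psi> X = id2 D (comp1 D (ncmp \<alpha>' X) (ncmp \<epsilon> X))" using assms(1) X by simp
      then show ?thesis using funcat_filler_components[OF fill X] by simp
    qed
  qed
  have \<delta>: "twonatural C D \<delta>" "nsrc \<delta> = F'" "ntgt \<delta> = G"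
    and P: "modification C D P" "nsrc P = \<alpha>'" "ntgt P = comp1 DC \<mu> \<delta>"
    using fill unfolding filler_def arr1_funcat_iff arr2_funcat_iff by blast+
  have \<mu>\<delta>: "comp1 DC \<mu> \<delta> = \<alpha>'"
    by (rule triple_eqI[where S = "Obj C"])
      (use comps \<delta> in \<open>simp_all add: square_twonatural twonatural_extensional[OF square_twonatural(4)]\<close>)
  moreover have "P = id2 DC \<alpha>'"
  proof (rule triple_eqI[where S = "Obj C"])
    show "ntgt P = ntgt (id2 DC \<alpha>')" using P(3) \<mu>\<delta> by (simp only: funcat_simps(11) triple_simps(2))
    show "ncmp P X = ncmp (id2 DC \<alpha>') X" if "X \<in> Obj C" for X using comps[OF that] that by simp
  qed (use P(2) modification_extensional[OF P(1)] in simp_all)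
  ultimately show ?thesis ..
qed

end

context
  fixes \<epsilon> \<mu> F F' G G' \<alpha>1 \<alpha>2 \<alpha>1' \<alpha>2' \<Phi> \<Phi>' \<delta>1 \<delta>2
  assumes pointwise: "\<epsilon> \<in> pointwise C D E" "\<mu> \<in> pointwise C D M"
    and \<epsilon>: "arr1 DC \<epsilon> F F'" and \<mu>: "arr1 DC \<mu> G G'"
    and \<alpha>: "arr1 DC \<alpha>1 F G" "arr1 DC \<alpha>2 F G" "arr1 DC \<alpha>1' F' G'" "arr1 DC \<alpha>2' F' G'"
    and squares: "comp1 DC \<alpha>1' \<epsilon> = comp1 DC \<mu> \<alpha>1" "comp1 DC \<alpha>2' \<epsilon> = comp1 DC \<mu> \<alpha>2"
    and \<Phi>: "arr2 DC \<Phi> \<alpha>1 \<alpha>2" "arr2 DC \<Phi>' \<alpha>1' \<alpha>2'" "lwhisk DC \<mu> \<Phi> = rwhisk DC \<Phi>' \<epsilon>"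
    and \<delta>1: "arr1 DC \<delta>1 F' G" "comp1 DC \<delta>1 \<epsilon> = \<alpha>1" "comp1 DC \<mu> \<delta>1 = \<alpha>1'"
    and \<delta>2: "arr1 DC \<delta>2 F' G" "comp1 DC \<delta>2 \<epsilon> = \<alpha>2" "comp1 DC \<mu> \<delta>2 = \<alpha>2'"
begin

lemma lift2_twonatural:
  "twonatural C D \<epsilon>" "twonatural C D \<mu>" "twonatural C D \<delta>1" "twonatural C D \<delta>2"
  "nsrc \<epsilon> = F" "ntgt \<epsilon> = F'" "nsrc \<mu> = G" "ntgt \<mu> = G'"
  "nsrc \<delta>1 = F'" "ntgt \<delta>1 = G" "nsrc \<delta>2 = F'" "ntgt \<delta>2 = G"
  using \<epsilon> \<mu> \<delta>1 \<delta>2 by (simp_all add: arr1_funcat_iff)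

lemma lift2_modification:
  "modification C D \<Phi>" "nsrc \<Phi> = \<alpha>1" "ntgt \<Phi> = \<alpha>2"
  "modification C D \<Phi>'" "nsrc \<Phi>' = \<alpha>1'" "ntgt \<Phi>' = \<alpha>2'"
  using \<Phi> by (simp_all add: arr2_funcat_iff)

lemma lift2_components:
  assumes X: "X \<in> Obj C"
  shows "ncmp \<epsilon> X \<in> E" "arr1 D (ncmp \<epsilon> X) (F0 F X) (F0 F' X)"
    "ncmp \<mu> X \<in> M" "arr1 D (ncmp \<mu> X) (F0 G X) (F0 G' X)"
    "arr1 D (ncmp \<alpha>1 X) (F0 F X) (F0 G X)" "arr1 D (ncmp \<alpha>2 X) (F0 F X) (F0 G X)"
    "arr1 D (ncmp \<alpha>1' X) (F0 F' X) (F0 G' X)" "arr1 D (ncmp \<alpha>2' X) (F0 F' X) (F0 G' X)"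
    "comp1 D (ncmp \<alpha>1' X) (ncmp \<epsilon> X) = comp1 D (ncmp \<mu> X) (ncmp \<alpha>1 X)"
    "comp1 D (ncmp \<alpha>2' X) (ncmp \<epsilon> X) = comp1 D (ncmp \<mu> X) (ncmp \<alpha>2 X)"
    "arr2 D (ncmp \<Phi> X) (ncmp \<alpha>1 X) (ncmp \<alpha>2 X)" "arr2 D (ncmp \<Phi>' X) (ncmp \<alpha>1' X) (ncmp \<alpha>2' X)"
    "lwhisk D (ncmp \<mu> X) (ncmp \<Phi> X) = rwhisk D (ncmp \<Phi>' X) (ncmp \<epsilon> X)"
    "arr1 D (ncmp \<delta>1 X) (F0 F' X) (F0 G X)" "comp1 D (ncmp \<delta>1 X) (ncmp \<epsilon> X) = ncmp \<alpha>1 X"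
    "comp1 D (ncmp \<mu> X) (ncmp \<delta>1 X) = ncmp \<alpha>1' X"
    "arr1 D (ncmp \<delta>2 X) (F0 F' X) (F0 G X)" "comp1 D (ncmp \<delta>2 X) (ncmp \<epsilon> X) = ncmp \<alpha>2 X"
    "comp1 D (ncmp \<mu> X) (ncmp \<delta>2 X) = ncmp \<alpha>2' X"
proof -
  have component_arr1: "arr1 D (ncmp a X) (F0 A X) (F0 B X)" if "arr1 DC a A B" for a A B
    using that twonatural_arr1[of C D a X] X by (simp add: arr1_funcat_iff)
  show "ncmp \<epsilon> X \<in> E" "ncmp \<mu> X \<in> M" using pointwise X unfolding pointwise_def by blast+
  show "arr1 D (ncmp \<epsilon> X) (F0 F X) (F0 F' X)" "arr1 D (ncmp \<mu> X) (F0 G X) (F0 G' X)"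
    "arr1 D (ncmp \<alpha>1 X) (F0 F X) (F0 G X)" "arr1 D (ncmp \<alpha>2 X) (F0 F X) (F0 G X)"
    "arr1 D (ncmp \<alpha>1' X) (F0 F' X) (F0 G' X)" "arr1 D (ncmp \<alpha>2' X) (F0 F' X) (F0 G' X)"
    "arr1 D (ncmp \<delta>1 X) (F0 F' X) (F0 G X)" "arr1 D (ncmp \<delta>2 X) (F0 F' X) (F0 G X)"
    using \<epsilon> \<mu> \<alpha> \<delta>1(1) \<delta>2(1) by (simp_all add: component_arr1)
  show "arr2 D (ncmp \<Phi> X) (ncmp \<alpha>1 X) (ncmp \<alpha>2 X)" "arr2 D (ncmp \<Phi>' X) (ncmp \<alpha>1' X) (ncmp \<alpha>2' X)"
    using modification_arr2[OF lift2_modification(1) X] modification_arr2[OF lift2_modification(4) X]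
    by (simp_all add: lift2_modification)
  show "comp1 D (ncmp \<alpha>1' X) (ncmp \<epsilon> X) = comp1 D (ncmp \<mu> X) (ncmp \<alpha>1 X)"
    "comp1 D (ncmp \<alpha>2' X) (ncmp \<epsilon> X) = comp1 D (ncmp \<mu> X) (ncmp \<alpha>2 X)"
    "comp1 D (ncmp \<delta>1 X) (ncmp \<epsilon> X) = ncmp \<alpha>1 X" "comp1 D (ncmp \<mu> X) (ncmp \<delta>1 X) = ncmp \<alpha>1' X"
    "comp1 D (ncmp \<delta>2 X) (ncmp \<epsilon> X) = ncmp \<alpha>2 X" "comp1 D (ncmp \<mu> X) (ncmp \<delta>2 X) = ncmp \<alpha>2' X"
    "lwhisk D (ncmp \<mu> X) (ncmp \<Phi> X) = rwhisk D (ncmp \<Phi>' X) (ncmp \<epsilon> X)"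
    using squares[THEN arg_cong[where f = "\<lambda>u. ncmp u X"]] \<delta>1(2,3)[THEN arg_cong[where f = "\<lambda>u. ncmp u X"]]
      \<delta>2(2,3)[THEN arg_cong[where f = "\<lambda>u. ncmp u X"]] \<Phi>(3)[THEN arg_cong[where f = "\<lambda>u. ncmp u X"]] X
    by simp_all
qed

lemma component_lift2_ex1:
  "X \<in> Obj C \<Longrightarrow> \<exists>!\<Delta>. arr2 D \<Delta> (ncmp \<delta>1 X) (ncmp \<delta>2 X) \<and>
     rwhisk D \<Delta> (ncmp \<epsilon> X) = ncmp \<Phi> X \<and> lwhisk D (ncmp \<mu> X) \<Delta> = ncmp \<Phi>' X"
  by (rule lift2_ex1[OF lift2_components])

lemma component_lifts2_modification:
  assumes lift: "\<And>X. X \<in> Obj C \<Longrightarrow> arr2 D (\<Delta> X) (ncmp \<delta>1 X) (ncmp \<delta>2 X) \<and>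
    rwhisk D (\<Delta> X) (ncmp \<epsilon> X) = ncmp \<Phi> X"
  shows "modification C D (\<delta>1, \<delta>2, \<lambda>X\<in>Obj C. \<Delta> X)"
proof (rule modificationI)
  fix f X Y assume f: "arr1 C f X Y"
  have X: "X \<in> Obj C" and Y: "Y \<in> Obj C" using C.arr1_ObjD f by blast+
  have F: "twofunctor C D F" and F': "twofunctor C D F'" and G: "twofunctor C D G"
    using lift2_twonatural twonatural_src twonatural_tgt by metis+
  note Ff = twofunctor_arr1[OF F f] and F'f = twofunctor_arr1[OF F' f] and Gf = twofunctor_arr1[OF G f]
  note cX = lift2_components[OF X] and cY = lift2_components[OF Y]
  have \<epsilon>_nat: "comp1 D (F1 F' f) (ncmp \<epsilon> X) = comp1 D (ncmp \<epsilon> Y) (F1 F f)"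
    and \<delta>1_nat: "comp1 D (F1 G f) (ncmp \<delta>1 X) = comp1 D (ncmp \<delta>1 Y) (F1 F' f)"
    and \<delta>2_nat: "comp1 D (F1 G f) (ncmp \<delta>2 X) = comp1 D (ncmp \<delta>2 Y) (F1 F' f)"
    using twonatural_naturality[OF lift2_twonatural(1) f] twonatural_naturality[OF lift2_twonatural(3) f]
      twonatural_naturality[OF lift2_twonatural(4) f]
    by (simp_all add: lift2_twonatural)
  have \<Phi>_nat: "lwhisk D (F1 G f) (ncmp \<Phi> X) = rwhisk D (ncmp \<Phi> Y) (F1 F f)"
    using modification_naturality[OF lift2_modification(1) f] \<alpha>(1)
    by (simp add: lift2_modification arr1_funcat_iff)
  have left: "arr2 D (lwhisk D (F1 G f) (\<Delta> X)) (comp1 D (F1 G f) (ncmp \<delta>1 X)) (comp1 D (F1 G f) (ncmp \<delta>2 X))"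
    using D.lwhisk_arr2[OF cX(14) Gf] lift[OF X] by blast
  have right: "arr2 D (rwhisk D (\<Delta> Y) (F1 F' f)) (comp1 D (F1 G f) (ncmp \<delta>1 X)) (comp1 D (F1 G f) (ncmp \<delta>2 X))"
    using D.rwhisk_arr2[OF F'f cY(14)] lift[OF Y] \<delta>1_nat \<delta>2_nat by simp
  have "rwhisk D (lwhisk D (F1 G f) (\<Delta> X)) (ncmp \<epsilon> X) = rwhisk D (ncmp \<Phi> Y) (F1 F f)"
    using D.lwhisk_rwhisk[OF cX(2) cX(14) Gf, of "\<Delta> X" "ncmp \<delta>2 X"] lift[OF X] \<Phi>_nat by simp
  moreover have "rwhisk D (rwhisk D (\<Delta> Y) (F1 F' f)) (ncmp \<epsilon> X) = rwhisk D (ncmp \<Phi> Y) (F1 F f)"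
    using D.rwhisk_rwhisk[OF cX(2) F'f cY(14), of "\<Delta> Y" "ncmp \<delta>2 Y"] \<epsilon>_nat
      D.rwhisk_rwhisk[OF Ff cY(2) cY(14), of "\<Delta> Y" "ncmp \<delta>2 Y"] lift[OF Y] by simp
  ultimately have "lwhisk D (F1 G f) (\<Delta> X) = rwhisk D (\<Delta> Y) (F1 F' f)"
    using rwhisk_E_cancel[OF cX(1,2) D.comp1_arr1[OF cX(14) Gf] D.comp1_arr1[OF cX(17) Gf] left right]
    by simp
  then show "lwhisk D (F1 (ntgt \<delta>1) f) (\<Delta> X) = rwhisk D (\<Delta> Y) (F1 (nsrc \<delta>1) f)"
    by (simp add: lift2_twonatural)
qed (use lift2_twonatural lift in simp_all)

lemma funcat_lift2_ex1: "\<exists>!\<Delta>. arr2 DC \<Delta> \<delta>1 \<delta>2 \<and> rwhisk DC \<Delta> \<epsilon> = \<Phi> \<and> lwhisk DC \<mu> \<Delta> = \<Phi>'"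
proof -
  have "\<forall>X\<in>Obj C. \<exists>\<Delta>. arr2 D \<Delta> (ncmp \<delta>1 X) (ncmp \<delta>2 X) \<and>
      rwhisk D \<Delta> (ncmp \<epsilon> X) = ncmp \<Phi> X \<and> lwhisk D (ncmp \<mu> X) \<Delta> = ncmp \<Phi>' X"
    using component_lift2_ex1 by blast
  then obtain \<Delta> where \<Delta>: "\<forall>X\<in>Obj C. arr2 D (\<Delta> X) (ncmp \<delta>1 X) (ncmp \<delta>2 X) \<and>
      rwhisk D (\<Delta> X) (ncmp \<epsilon> X) = ncmp \<Phi> X \<and> lwhisk D (ncmp \<mu> X) (\<Delta> X) = ncmp \<Phi>' X"
    by (rule bchoice[THEN exE])
  let ?\<Delta> = "(\<delta>1, \<delta>2, \<lambda>X\<in>Obj C. \<Delta> X)"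
  show ?thesis
  proof (rule ex1I[of _ ?\<Delta>], intro conjI)
    show "arr2 DC ?\<Delta> \<delta>1 \<delta>2"
      using component_lifts2_modification \<Delta> by (simp add: arr2_funcat_iff)
    show "rwhisk DC ?\<Delta> \<epsilon> = \<Phi>"
      by (rule triple_eqI[where S = "Obj C"])
        (use \<Delta> \<delta>1(2) \<delta>2(2) lift2_modification modification_extensional[OF lift2_modification(1)] in simp_all)
    show "lwhisk DC \<mu> ?\<Delta> = \<Phi>'"
      by (rule triple_eqI[where S = "Obj C"])
        (use \<Delta> \<delta>1(3) \<delta>2(3) lift2_modification modification_extensional[OF lift2_modification(4)] in simp_all)
  next
    fix Q assume "arr2 DC Q \<delta>1 \<delta>2 \<and> rwhisk DC Q \<epsilon> = \<Phi> \<and> lwhisk DC \<mu> Q = \<Phi>'"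
    then have Q: "modification C D Q" "nsrc Q = \<delta>1" "ntgt Q = \<delta>2" "rwhisk DC Q \<epsilon> = \<Phi>" "lwhisk DC \<mu> Q = \<Phi>'"
      unfolding arr2_funcat_iff by blast+
    have eq: "ncmp Q X = \<Delta> X" if X: "X \<in> Obj C" for X
    proof -
      have "arr2 D (ncmp Q X) (ncmp \<delta>1 X) (ncmp \<delta>2 X)" using modification_arr2[OF Q(1) X] Q(2,3) by simp
      moreover have "rwhisk D (ncmp Q X) (ncmp \<epsilon> X) = ncmp \<Phi> X"
        and "lwhisk D (ncmp \<mu> X) (ncmp Q X) = ncmp \<Phi>' X"
        using arg_cong[OF Q(4), of "\<lambda>u. ncmp u X"] arg_cong[OF Q(5), of "\<lambda>u. ncmp u X"] X by simp_all
      ultimately show ?thesis using component_lift2_ex1[OF X] \<Delta> X by blast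
    qed
    show "Q = ?\<Delta>"
      by (rule triple_eqI[where S = "Obj C"]) (use Q eq modification_extensional[OF Q(1)] in simp_all)
  qed
qed

end

context
  fixes \<mu> \<alpha> \<theta> F G
  assumes \<mu>: "\<mu> \<in> pointwise C D M" "arr1 DC \<mu> F G" and \<alpha>: "arr1 DC \<alpha> G F"
    and \<theta>: "arr2 DC \<theta> (comp1 DC \<mu> \<alpha>) (id1 DC G)" "inv2 DC \<theta>"
begin

lemma rigidity_data:
  "twonatural C D \<mu>" "nsrc \<mu> = F" "ntgt \<mu> = G" "twonatural C D \<alpha>" "nsrc \<alpha> = G" "ntgt \<alpha> = F"
  "modification C D \<theta>" "nsrc \<theta> = comp1 DC \<mu> \<alpha>" "ntgt \<theta> = id1 DC G"
  using \<mu>(2) \<alpha> \<theta>(1) unfolding arr1_funcat_iff arr2_funcat_iff by blast+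

lemma rigidity_components:
  assumes X: "X \<in> Obj C"
  shows "ncmp \<mu> X \<in> M" "arr1 D (ncmp \<mu> X) (F0 F X) (F0 G X)" "arr1 D (ncmp \<alpha> X) (F0 G X) (F0 F X)"
    "arr2 D (ncmp \<theta> X) (comp1 D (ncmp \<mu> X) (ncmp \<alpha> X)) (id1 D (F0 G X))" "inv2 D (ncmp \<theta> X)"
  using \<mu>(1) X twonatural_arr1[OF rigidity_data(1) X] twonatural_arr1[OF rigidity_data(4) X]
    modification_arr2[OF rigidity_data(7) X] \<theta>(2)
  by (simp_all add: pointwise_def rigidity_data inv2_funcat_iff)

lemma rigidity_cell_ex1:
  assumes X: "X \<in> Obj C"
  shows "\<exists>!\<rho>. arr2 D \<rho> (comp1 D (ncmp \<alpha> X) (ncmp \<mu> X)) (id1 D (F0 F X)) \<and> inv2 D \<rho> \<and>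
    lwhisk D (ncmp \<mu> X) \<rho> = rwhisk D (ncmp \<theta> X) (ncmp \<mu> X)"
proof (rule M_creates_inv2_ex1[OF rigidity_components(1,2)[OF X]])
  note c = rigidity_components[OF X]
  have \<mu>\<alpha>: "arr1 D (comp1 D (ncmp \<mu> X) (ncmp \<alpha> X)) (F0 G X) (F0 G X)" using D.comp1_arr1[OF c(3) c(2)] .
  show "arr1 D (comp1 D (ncmp \<alpha> X) (ncmp \<mu> X)) (F0 F X) (F0 F X)" using D.comp1_arr1[OF c(2) c(3)] .
  show "arr1 D (id1 D (F0 F X)) (F0 F X) (F0 F X)" using D.id1_arr1 D.arr1_ObjD(1)[OF c(2)] by blast
  show "arr2 D (rwhisk D (ncmp \<theta> X) (ncmp \<mu> X))
      (comp1 D (ncmp \<mu> X) (comp1 D (ncmp \<alpha> X) (ncmp \<mu> X))) (comp1 D (ncmp \<mu> X) (id1 D (F0 F X)))"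
    using D.rwhisk_arr2[OF c(2) \<mu>\<alpha> c(4)] D.comp1_assoc[OF c(2) c(3) c(2)]
      D.comp1_id1_left[OF c(2)] D.comp1_id1_right[OF c(2)] by simp
  show "inv2 D (rwhisk D (ncmp \<theta> X) (ncmp \<mu> X))" using D.inv2_rwhisk[OF c(2) \<mu>\<alpha> c(4,5)] .
qed

lemma rigidity_cells_naturality:
  assumes \<rho>: "\<And>X. X \<in> Obj C \<Longrightarrow> arr2 D (\<rho> X) (comp1 D (ncmp \<alpha> X) (ncmp \<mu> X)) (id1 D (F0 F X)) \<and>
    lwhisk D (ncmp \<mu> X) (\<rho> X) = rwhisk D (ncmp \<theta> X) (ncmp \<mu> X)"
    and f: "arr1 C f X Y"
  shows "lwhisk D (F1 F f) (\<rho> X) = rwhisk D (\<rho> Y) (F1 F f)"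
proof -
  have X: "X \<in> Obj C" and Y: "Y \<in> Obj C" using C.arr1_ObjD f by blast+
  have F: "twofunctor C D F" and G: "twofunctor C D G"
    using twonatural_src[OF rigidity_data(1)] twonatural_tgt[OF rigidity_data(1)] rigidity_data by simp_all
  note Ff = twofunctor_arr1[OF F f] and Gf = twofunctor_arr1[OF G f]
  note cX = rigidity_components[OF X] and cY = rigidity_components[OF Y]
  note \<rho>X = \<rho>[OF X] and \<rho>Y = \<rho>[OF Y]
  have \<alpha>\<mu>X: "arr1 D (comp1 D (ncmp \<alpha> X) (ncmp \<mu> X)) (F0 F X) (F0 F X)"
    and \<alpha>\<mu>Y: "arr1 D (comp1 D (ncmp \<alpha> Y) (ncmp \<mu> Y)) (F0 F Y) (F0 F Y)"
    and \<mu>\<alpha>X: "arr1 D (comp1 D (ncmp \<mu> X) (ncmp \<alpha> X)) (F0 G X) (F0 G X)"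
    and \<mu>\<alpha>Y: "arr1 D (comp1 D (ncmp \<mu> Y) (ncmp \<alpha> Y)) (F0 G Y) (F0 G Y)"
    using D.comp1_arr1 cX cY by blast+
  have \<mu>_nat: "comp1 D (F1 G f) (ncmp \<mu> X) = comp1 D (ncmp \<mu> Y) (F1 F f)"
    using twonatural_naturality[OF rigidity_data(1) f] rigidity_data by simp
  have \<alpha>\<mu>_nat: "comp1 D (F1 F f) (comp1 D (ncmp \<alpha> X) (ncmp \<mu> X))
      = comp1 D (comp1 D (ncmp \<alpha> Y) (ncmp \<mu> Y)) (F1 F f)"
    using twonatural_naturality[OF twonatural_comp1[OF rigidity_data(1,4)] f] rigidity_data X Y by simp
  have \<theta>_nat: "lwhisk D (F1 G f) (ncmp \<theta> X) = rwhisk D (ncmp \<theta> Y) (F1 G f)"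
    using modification_naturality[OF rigidity_data(7) f] rigidity_data by simp
  have left: "arr2 D (lwhisk D (F1 F f) (\<rho> X)) (comp1 D (F1 F f) (comp1 D (ncmp \<alpha> X) (ncmp \<mu> X))) (F1 F f)"
    using D.lwhisk_arr2[OF \<alpha>\<mu>X Ff, of "\<rho> X" "id1 D (F0 F X)"] \<rho>X D.comp1_id1_right[OF Ff] by simp
  have right: "arr2 D (rwhisk D (\<rho> Y) (F1 F f)) (comp1 D (F1 F f) (comp1 D (ncmp \<alpha> X) (ncmp \<mu> X))) (F1 F f)"
    using D.rwhisk_arr2[OF Ff \<alpha>\<mu>Y, of "\<rho> Y" "id1 D (F0 F Y)"] \<rho>Y D.comp1_id1_left[OF Ff] \<alpha>\<mu>_nat by simp
  have "lwhisk D (ncmp \<mu> Y) (lwhisk D (F1 F f) (\<rho> X)) = lwhisk D (F1 G f) (lwhisk D (ncmp \<mu> X) (\<rho> X))"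
    using D.lwhisk_lwhisk[OF \<alpha>\<mu>X Ff cY(2), of "\<rho> X" "id1 D (F0 F X)"] \<mu>_nat
      D.lwhisk_lwhisk[OF \<alpha>\<mu>X cX(2) Gf, of "\<rho> X" "id1 D (F0 F X)"] \<rho>X by simp
  also have "\<dots> = rwhisk D (rwhisk D (ncmp \<theta> Y) (F1 G f)) (ncmp \<mu> X)"
    using \<rho>X D.lwhisk_rwhisk[OF cX(2) \<mu>\<alpha>X Gf cX(4)] \<theta>_nat by simp
  also have "\<dots> = rwhisk D (lwhisk D (ncmp \<mu> Y) (\<rho> Y)) (F1 F f)"
    using D.rwhisk_rwhisk[OF cX(2) Gf \<mu>\<alpha>Y cY(4)] \<mu>_nat D.rwhisk_rwhisk[OF Ff cY(2) \<mu>\<alpha>Y cY(4)] \<rho>Y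
    by simp
  also have "\<dots> = lwhisk D (ncmp \<mu> Y) (rwhisk D (\<rho> Y) (F1 F f))"
    using D.lwhisk_rwhisk[OF Ff \<alpha>\<mu>Y cY(2), of "\<rho> Y" "id1 D (F0 F Y)"] \<rho>Y by simp
  finally show ?thesis
    using lwhisk_M_cancel[OF cY(1,2) D.comp1_arr1[OF \<alpha>\<mu>X Ff] Ff left right] by simp
qed

lemma rigidity_cells_modification:
  assumes \<rho>: "\<And>X. X \<in> Obj C \<Longrightarrow> arr2 D (\<rho> X) (comp1 D (ncmp \<alpha> X) (ncmp \<mu> X)) (id1 D (F0 F X)) \<and>
    lwhisk D (ncmp \<mu> X) (\<rho> X) = rwhisk D (ncmp \<theta> X) (ncmp \<mu> X)"
  shows "modification C D (comp1 DC \<alpha> \<mu>, id1 DC F, \<lambda>X\<in>Obj C. \<rho> X)"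
proof (rule modificationI)
  show "twonatural C D (comp1 DC \<alpha> \<mu>)" using twonatural_comp1[OF rigidity_data(1,4)] rigidity_data by simp
  show "twonatural C D (id1 DC F)"
    using twonatural_id1 twonatural_src[OF rigidity_data(1)] rigidity_data by simp
  show "lwhisk D (F1 (ntgt (comp1 DC \<alpha> \<mu>)) f) (\<rho> X) = rwhisk D (\<rho> Y) (F1 (nsrc (comp1 DC \<alpha> \<mu>)) f)"
    if "arr1 C f X Y" for f X Y
    using rigidity_cells_naturality[OF \<rho> that] rigidity_data by simp
qed (use \<rho> rigidity_data in simp_all)

lemma funcat_rigidity: "iso2cells DC (comp1 DC \<alpha> \<mu>) (id1 DC F)"
proof -
  have "\<forall>X\<in>Obj C. \<exists>\<rho>. arr2 D \<rho> (comp1 D (ncmp \<alpha> X) (ncmp \<mu> X)) (id1 D (F0 F X)) \<and> inv2 D \<rho> \<and>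
      lwhisk D (ncmp \<mu> X) \<rho> = rwhisk D (ncmp \<theta> X) (ncmp \<mu> X)"
    using rigidity_cell_ex1 by blast
  then obtain \<rho> where \<rho>: "\<forall>X\<in>Obj C. arr2 D (\<rho> X) (comp1 D (ncmp \<alpha> X) (ncmp \<mu> X)) (id1 D (F0 F X)) \<and>
      inv2 D (\<rho> X) \<and> lwhisk D (ncmp \<mu> X) (\<rho> X) = rwhisk D (ncmp \<theta> X) (ncmp \<mu> X)"
    by (rule bchoice[THEN exE])
  have "modification C D (comp1 DC \<alpha> \<mu>, id1 DC F, \<lambda>X\<in>Obj C. \<rho> X)"
    using rigidity_cells_modification \<rho> by blast
  with \<rho> show ?thesis
    unfolding iso2cells_def
    by (intro exI[of _ "(comp1 DC \<alpha> \<mu>, id1 DC F, \<lambda>X\<in>Obj C. \<rho> X)"])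
      (simp add: arr2_funcat_iff inv2_funcat_iff del: funcat_simps)
qed

end

text \<open>The premises of the lemmas above come in the order of the quantifiers in
  \<open>enhanced_fs\<close>, so they apply by \<open>rule\<close>.\<close>

lemma funcat_rigid_enhanced_fs:
  "rigid_enhanced_fs DC (pointwise C D E) (pointwise C D M)"
  unfolding rigid_enhanced_fs_def enhanced_fs_def rigid_def filler_def[symmetric]
proof (intro conjI ballI allI impI)
  show "pointwise C D E \<subseteq> Hom1 DC" "pointwise C D M \<subseteq> Hom1 DC" by (auto simp: pointwise_def)
  show "{f. iso1 DC f} \<subseteq> pointwise C D E" "{f. iso1 DC f} \<subseteq> pointwise C D M"
    using pointwise_iso1 by blast+
  show "iso2cells DC (comp1 DC \<alpha> \<mu>) (id1 DC F)"
    if "\<mu> \<in> pointwise C D M" "arr1 DC \<mu> F G" "arr1 DC \<alpha> G F" "iso2cells DC (comp1 DC \<mu> \<alpha>) (id1 DC G)"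
    for \<mu> \<alpha> F G
    using that funcat_rigidity unfolding iso2cells_def by blast
qed (rule funcat_factorization funcat_filler_ex1 funcat_filler_id2[THEN conjunct1]
    funcat_filler_id2[THEN conjunct2] funcat_lift2_ex1; assumption)+

end

theorem theorem2p9:
  fixes C :: "('oc,'mc,'tc) twocat" and D :: "('od,'md,'td) twocat"
    and E M :: "'md set"
  assumes "twocat C" and "twocat D"
    and "enhanced_fs D E M"
    and "separates_parallel_pairs D E M"
    and "\<forall>e\<in>E. two_epi D e" and "\<forall>m\<in>M. two_mono D m"
    and "\<forall>m\<in>M. creates_inv2 D m"
  shows "rigid_enhanced_fs (funcat C D) (pointwise C D E) (pointwise C D M)"
proof -
  interpret pointwise_factorization C D E M
    using assms by unfold_locales (simp_all add: twocategory_def enhanced_factorization_axioms_def)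
  show ?thesis by (rule funcat_rigid_enhanced_fs)
qed

end
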